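(* Let $G$ be a connected graph having index $\lambda>2$ and second largest eigenvalue at most $2$. Then: (a) The vertex set $V(G)$ can be partitioned as $V(G)=M\cup A\cup H$ in such a way that: the induced subgraph $G|_M$ has index greater than $2$ and is minimal with respect to this property (every induced subgraph of $G|_M$ obtained by deleting a vertex has index at most $2$; such minimal graphs are the $18$ graphs listed by Cvetković and Rowlinson, each with at most $10$ vertices), and $G|_M$ has only one eigenvalue greater than $2$; $A$ consists of all vertices of $V(G)\setminus M$ adjacent in $G$ to some vertex of $M$; and the induced subgraph $G|_H$ is cyclotomic. (b) $G$ has at most $B:=10(3\lambda^4+\lambda^2+1)$ vertices of degree greater than $2$, and at most $\lambda^2B$ vertices of degree $1$.
   Context: Graphs are finite simple graphs; eigenvalues are those of the adjacency matrix. The index of a graph is its largest eigenvalue. A graph is cyclotomic if all its eigenvalues lie in $[-2,2]$. For $S\subseteq V(G)$, $G|_S$ denotes the induced subgraph on $S$. *)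

theory Defs
  imports "Jordan_Normal_Form.Char_Poly"
begin

text \<open>A finite simple graph is given by a finite vertex set V and a symmetric,
irreflexive adjacency relation E.  Induced subgraphs G|_S are represented by
the vertex subset S (with the same relation E).\<close>

definition simple_graph :: "'a set \<Rightarrow> ('a \<Rightarrow> 'a \<Rightarrow> bool) \<Rightarrow> bool" where
  "simple_graph V E \<longleftrightarrow> finite V \<and> (\<forall>u v. E u v \<longrightarrow> E v u) \<and> (\<forall>v. \<not> E v v)"

definition connected_graph :: "'a set \<Rightarrow> ('a \<Rightarrow> 'a \<Rightarrow> bool) \<Rightarrow> bool" where
  "connected_graph V E \<longleftrightarrow> V \<noteq> {} \<and>
     (\<forall>u\<in>V. \<forall>v\<in>V. (\<lambda>x y. x \<in> V \<and> y \<in> V \<and> E x y)\<^sup>*\<^sup>* u v)"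

definition adj_matrix :: "'a::linorder set \<Rightarrow> ('a \<Rightarrow> 'a \<Rightarrow> bool) \<Rightarrow> real mat" where
  "adj_matrix S E = (let vs = sorted_list_of_set S in
     mat (card S) (card S) (\<lambda>(i,j). if E (vs ! i) (vs ! j) then 1 else 0))"

text \<open>Spectrum (eigenvalues with multiplicity) = real roots of the characteristic polynomial
(all roots are real since the matrix is real symmetric).\<close>
definition spectrum_mset :: "'a::linorder set \<Rightarrow> ('a \<Rightarrow> 'a \<Rightarrow> bool) \<Rightarrow> real multiset" where
  "spectrum_mset S E = proots (char_poly (adj_matrix S E))"

definition eigs :: "'a::linorder set \<Rightarrow> ('a \<Rightarrow> 'a \<Rightarrow> bool) \<Rightarrow> real list" where
  "eigs S E = rev (sorted_list_of_multiset (spectrum_mset S E))"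

definition graph_index :: "'a::linorder set \<Rightarrow> ('a \<Rightarrow> 'a \<Rightarrow> bool) \<Rightarrow> real" where
  "graph_index S E = eigs S E ! 0"

definition second_eig :: "'a::linorder set \<Rightarrow> ('a \<Rightarrow> 'a \<Rightarrow> bool) \<Rightarrow> real" where
  "second_eig S E = eigs S E ! 1"

definition cyclotomic :: "'a::linorder set \<Rightarrow> ('a \<Rightarrow> 'a \<Rightarrow> bool) \<Rightarrow> bool" where
  "cyclotomic S E \<longleftrightarrow> (\<forall>\<mu> \<in># spectrum_mset S E. -2 \<le> \<mu> \<and> \<mu> \<le> 2)"

definition degree :: "'a set \<Rightarrow> ('a \<Rightarrow> 'a \<Rightarrow> bool) \<Rightarrow> 'a \<Rightarrow> nat" where
  "degree V E v = card {w \<in> V. E v w}"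

end

theory Submission
  imports Defs
begin

text \<open>
The argument runs through the adjacency form \<open>Q f = \<Sum>\<^bsub>E u w\<^esub> f u * f w\<close>. By the spectral
theorem, proved below with Householder reflections, the index of \<open>G|\<^sub>S\<close> exceeds \<open>t\<close> iff
\<open>Q f > t * \<Sum> f\<^sup>2\<close> for some \<open>f\<close> on \<open>S\<close>, and at least two eigenvalues exceed \<open>t\<close> iff this holds
on a whole plane of functions. Hence two vertex sets of index \<open>> 2\<close> with no edges between them
force \<open>\<lambda>\<^sub>2 > 2\<close>.

(a) Let \<open>M\<close> be a smallest vertex set of index \<open>> 2\<close>. Since \<open>\<lambda>\<^sub>2 \<le> 2\<close>, the part \<open>H\<close> of the graph
beyond the neighbourhood \<open>A\<close> of \<open>M\<close> has index at most \<open>2\<close>; passing from \<open>f\<close> to \<open>\<bar>f\<bar>\<close> bounds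
its least eigenvalue by \<open>-2\<close> as well.

(b) In a graph of index at most \<open>2\<close>, testing \<open>Q\<close> on the function that is \<open>2\<close> on non-leaves and
\<open>1\<close> on leaves, together with the edge count of a spanning forest, shows that there are at most
\<open>2|K|\<close> vertices of degree \<open>\<ge> 3\<close> if every component meets \<open>K\<close>. Applied to \<open>G|\<^sub>H\<close>, with \<open>K\<close> the
vertices of \<open>H\<close> adjacent to \<open>A\<close>, this bounds the vertices of degree \<open>> 2\<close> by those in \<open>M\<close>, the
size of \<open>A\<close> and \<open>3|K|\<close>. As degrees are at most \<open>\<lambda>\<^sup>2\<close>, it remains to keep \<open>M\<close> small: a vertex of
degree \<open>\<ge> 4\<close> gives \<open>|M| \<le> 6\<close>, and in a subcubic graph \<open>M\<close> is the first ball around a vertex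
with index \<open>> 2\<close>, whose spheres at most double in size. Finally the number of leaves is at most
\<open>2 + \<Sum>\<^bsub>deg u > 2\<^esub> (deg u - 2)\<close>.
\<close>

section \<open>Orthogonal diagonalisation of real symmetric matrices\<close>

lemma index_mult_mat_sum:
  assumes "M \<in> carrier_mat n m" "N \<in> carrier_mat m p" "i < n" "j < p"
  shows "(M * N) $$ (i,j) = (\<Sum>k<m. M$$(i,k) * N$$(k,j))"
  using assms by (auto simp: scalar_prod_def atLeast0LessThan intro!: sum.cong)

lemma index_mult_mat_vec_sum:
  assumes "M \<in> carrier_mat n m" "x \<in> carrier_vec m" "i < n"
  shows "(M *\<^sub>v x) $ i = (\<Sum>k<m. M$$(i,k) * x$k)"
  using assms by (auto simp: scalar_prod_def atLeast0LessThan intro!: sum.cong)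

lemma index_mult_mat_unit_vec_0:
  fixes M :: "real mat"
  assumes "M \<in> carrier_mat n n" "i < n"
  shows "(M *\<^sub>v unit_vec n 0) $ i = M $$ (i,0)"
proof -
  have "(M *\<^sub>v unit_vec n 0) $ i = (\<Sum>k<n. M$$(i,k) * unit_vec n 0 $ k)"
    using assms by (intro index_mult_mat_vec_sum) auto
  also have "\<dots> = (\<Sum>k<n. if k = 0 then M$$(i,k) else 0)"
    using assms by (intro sum.cong) auto
  finally show ?thesis using assms by (simp add: sum.delta')
qed

lemma nonzero_vec_component:
  assumes "v \<in> carrier_vec n" "v \<noteq> 0\<^sub>v n"
  obtains i where "i < n" "v $ i \<noteq> 0"
  using assms by (metis carrier_vecD eq_vecI index_zero_vec(1) index_zero_vec(2))

lemma real_sym_mat_real_eigenvalue: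
  fixes A :: "real mat"
  assumes A: "A \<in> carrier_mat n n" and sym: "\<And>i j. i<n \<Longrightarrow> j<n \<Longrightarrow> A $$ (i,j) = A $$ (j,i)"
    and n: "n > 0"
  shows "\<exists>r. eigenvalue A r"
proof -
  let ?Ac = "map_mat complex_of_real A"
  have Ac: "?Ac \<in> carrier_mat n n" using A by simp
  from char_poly_factorized[OF Ac] obtain as where cp: "char_poly ?Ac = (\<Prod>a\<leftarrow>as. [:-a,1:])"
    and len: "length as = n" by blast
  from len n obtain a as' where as: "as = a # as'" by (cases as) auto
  have root: "poly (char_poly ?Ac) a = 0" unfolding cp as by (simp add: poly_prod_list)
  hence "eigenvalue ?Ac a" using eigenvalue_root_char_poly[OF Ac] by simp
  then obtain z where zc: "z \<in> carrier_vec n" and z0: "z \<noteq> 0\<^sub>v n" and ze: "?Ac *\<^sub>v z = a \<cdot>\<^sub>v z"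
    unfolding eigenvalue_def eigenvector_def using Ac by auto
  txt \<open>The Hermitian form \<open>z\<^sup>* A z = a (z\<^sup>* z)\<close> is real, hence so is \<open>a\<close>.\<close>
  define s where "s = (\<Sum>i<n. cnj (z$i) * (?Ac *\<^sub>v z)$i)"
  define N where "N = (\<Sum>i<n. (cmod (z$i))^2)"
  have s_eq: "s = a * complex_of_real N"
  proof -
    have "s = a * (\<Sum>i<n. cnj (z$i) * z$i)" unfolding s_def ze using zc
      by (simp add: sum_distrib_left mult.assoc mult.left_commute)
    also have "(\<Sum>i<n. cnj (z$i) * z$i) = complex_of_real N"
      unfolding N_def of_real_sum by (intro sum.cong refl) (metis complex_norm_square mult.commute)
    finally show ?thesis .
  qed
  have s_expand: "s = (\<Sum>i<n. \<Sum>j<n. cnj (z$i) * complex_of_real (A$$(i,j)) * z$j)"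
  proof -
    have "(?Ac *\<^sub>v z)$i = (\<Sum>j<n. complex_of_real (A$$(i,j)) * z$j)" if "i < n" for i
      using index_mult_mat_vec_sum[OF Ac zc that] A that by simp
    thus ?thesis unfolding s_def by (simp add: sum_distrib_left mult.assoc)
  qed
  have "cnj s = (\<Sum>i<n. \<Sum>j<n. z$i * complex_of_real (A$$(i,j)) * cnj (z$j))"
    unfolding s_expand by (simp add: cnj_sum)
  also have "\<dots> = (\<Sum>j<n. \<Sum>i<n. z$i * complex_of_real (A$$(i,j)) * cnj (z$j))"
    by (rule sum.swap)
  also have "\<dots> = s" unfolding s_expand
    by (intro sum.cong refl) (simp add: sym mult.commute mult.left_commute)
  finally have "cnj s = s" .
  obtain i0 where "i0 < n" "z$i0 \<noteq> 0" using nonzero_vec_component[OF zc z0] .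
  hence "(cmod (z$i0))^2 \<le> N" "(cmod (z$i0))^2 > 0"
    unfolding N_def by (auto intro!: member_le_sum)
  hence "N \<noteq> 0" by linarith
  with \<open>cnj s = s\<close> have real_a: "cnj a = a" unfolding s_eq by simp
  have "Im a = 0" using arg_cong[OF real_a, of Im] by simp
  then obtain r where "a = complex_of_real r" by (metis complex_is_Real_iff Reals_cases)
  hence "poly (char_poly ?Ac) (complex_of_real r) = 0" using root by simp
  hence "complex_of_real (poly (char_poly A) r) = 0"
    unfolding of_real_hom.char_poly_hom[OF A] by (simp add: of_real_hom.poly_map_poly)
  hence "eigenvalue A r" using eigenvalue_root_char_poly[OF A] by simp
  thus ?thesis ..
qed

lemma unit_eigenvector:
  fixes A :: "real mat"
  assumes A: "A \<in> carrier_mat n n" and "eigenvalue A r"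
  shows "\<exists>v. v \<in> carrier_vec n \<and> v \<bullet> v = 1 \<and> A *\<^sub>v v = r \<cdot>\<^sub>v v"
proof -
  obtain w where wc: "w \<in> carrier_vec n" and w0: "w \<noteq> 0\<^sub>v n" and we: "A *\<^sub>v w = r \<cdot>\<^sub>v w"
    using assms unfolding eigenvalue_def eigenvector_def by auto
  obtain j0 where "j0 < n" "w$j0 \<noteq> 0" using nonzero_vec_component[OF wc w0] .
  hence "(w$j0)^2 \<le> (\<Sum>i<n. (w$i)^2)" "(w$j0)^2 > 0" by (auto intro!: member_le_sum)
  moreover have ww: "w \<bullet> w = (\<Sum>i<n. (w$i)^2)"
    using wc by (simp add: scalar_prod_def atLeast0LessThan power2_eq_square)
  ultimately have wpos: "w \<bullet> w > 0" by linarith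
  define v where "v = (1 / sqrt (w \<bullet> w)) \<cdot>\<^sub>v w"
  have "v \<bullet> v = (1 / sqrt (w \<bullet> w))^2 * (w \<bullet> w)" unfolding v_def using wc
    by (simp add: power2_eq_square)
  also have "\<dots> = 1" using wpos by (simp add: power_divide)
  finally have "v \<bullet> v = 1" .
  moreover have "A *\<^sub>v v = r \<cdot>\<^sub>v v" unfolding v_def using A wc we
    by (simp add: mult_mat_vec smult_smult_assoc mult.commute)
  moreover have "v \<in> carrier_vec n" unfolding v_def using wc by simp
  ultimately show ?thesis by blast
qed

lemma householder_reflection:
  fixes v :: "real vec"
  assumes vc: "v \<in> carrier_vec n" and vv: "v \<bullet> v = 1" and n: "0 < n"
  shows "\<exists>H. H \<in> carrier_mat n n \<and> transpose_mat H = H \<and> H * H = 1\<^sub>m n \<and> H *\<^sub>v unit_vec n 0 = v"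
proof (cases "v = unit_vec n 0")
  case True then show ?thesis by (intro exI[of _ "1\<^sub>m n"]) simp
next
  case False
  define w where "w = v - unit_vec n 0"
  have wi: "\<And>i. i < n \<Longrightarrow> w$i = v$i - (if i = 0 then 1 else 0)" unfolding w_def using vc by simp
  define s where "s = (\<Sum>k<n. (w$k)^2)"
  have v1: "(\<Sum>k<n. (v$k)^2) = 1" using vv vc unfolding scalar_prod_def
    by (simp add: atLeast0LessThan power2_eq_square)
  have "s = (\<Sum>k<n. (v$k)^2 - 2 * (if k = 0 then v$k else 0) + (if k = 0 then 1 else 0))"
    unfolding s_def by (intro sum.cong refl) (auto simp: wi power2_eq_square algebra_simps)
  also have "\<dots> = 2 - 2 * v$0" using n v1 by (simp add: sum.distrib sum_subtractf sum_distrib_left[symmetric])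
  finally have s2: "s = 2 - 2 * v$0" .
  obtain i0 where i0: "i0 < n" "w$i0 \<noteq> 0"
  proof (rule ccontr)
    assume "\<not> thesis"
    hence "\<forall>i<n. w$i = 0" using that by blast
    hence "v = unit_vec n 0" using vc wi by (intro eq_vecI) force+
    thus False using False by simp
  qed
  hence "(w$i0)^2 \<le> s" "(w$i0)^2 > 0" unfolding s_def by (auto intro!: member_le_sum)
  hence spos: "s > 0" by linarith
  define H where "H = mat n n (\<lambda>(i,j). (if i = j then 1 else 0) - 2 * (w$i) * (w$j) / s)"
  have Hc: "H \<in> carrier_mat n n" unfolding H_def by simp
  have Hij: "\<And>i j. i < n \<Longrightarrow> j < n \<Longrightarrow> H $$ (i,j) = (if i = j then 1 else 0) - 2 * (w$i) * (w$j) / s"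
    unfolding H_def by simp
  have HT: "transpose_mat H = H" using Hc by (intro eq_matI) (auto simp: Hij mult.commute)
  have HH: "H * H = 1\<^sub>m n"
  proof (rule eq_matI)
    fix i j assume "i < dim_row (1\<^sub>m n)" and "j < dim_col (1\<^sub>m n)"
    hence i: "i < n" and j: "j < n" by auto
    have "(H * H) $$ (i,j) = (\<Sum>k<n. H$$(i,k) * H$$(k,j))" by (rule index_mult_mat_sum[OF Hc Hc i j])
    also have "\<dots> = (\<Sum>k<n. (if k = i then (if k = j then 1 else 0) else 0))
         - (\<Sum>k<n. (if k = i then 2 * (w$k) * (w$j) / s else 0))
         - (\<Sum>k<n. (if k = j then 2 * (w$i) * (w$k) / s else 0))
         + (\<Sum>k<n. 4 * (w$i) * (w$j) / s^2 * (w$k)^2)"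
      unfolding sum_subtractf[symmetric] sum.distrib[symmetric]
      using spos by (intro sum.cong refl) (auto simp: Hij i j power2_eq_square field_simps)
    also have "\<dots> = (if i = j then 1 else 0) - 2 * (w$i) * (w$j) / s - 2 * (w$i) * (w$j) / s
        + 4 * (w$i) * (w$j) / s^2 * s"
      using i j unfolding s_def by (simp add: sum.delta' sum_distrib_left)
    also have "\<dots> = 1\<^sub>m n $$ (i,j)" using spos i j by (simp add: power2_eq_square field_simps)
    finally show "(H * H) $$ (i,j) = 1\<^sub>m n $$ (i,j)" .
  qed (use Hc in auto)
  have He: "H *\<^sub>v unit_vec n 0 = v"
  proof (rule eq_vecI)
    fix i assume "i < dim_vec v"
    hence i: "i < n" using vc by simp
    have "(H *\<^sub>v unit_vec n 0) $ i = (if i = 0 then 1 else 0) - 2 * (w$i) * (v$0 - 1) / s"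
      using index_mult_mat_unit_vec_0[OF Hc i] i n by (simp add: Hij wi)
    also have "\<dots> = v $ i"
      using spos i unfolding s2 by (simp add: wi field_simps)
    finally show "(H *\<^sub>v unit_vec n 0) $ i = v $ i" .
  qed (use Hc vc in auto)
  show ?thesis using Hc HT HH He by blast
qed

definition diag_of_list :: "real list \<Rightarrow> real mat" where
  "diag_of_list ds = mat (length ds) (length ds) (\<lambda>(i,j). if i = j then ds!i else 0)"

lemma diag_of_list_carrier [simp]: "diag_of_list ds \<in> carrier_mat (length ds) (length ds)"
  by (simp add: diag_of_list_def)

lemma index_conjugate_diag_of_list:
  assumes P: "P \<in> carrier_mat n n" and l: "length ds = n" and i: "i<n" and j: "j<n"
  shows "(P * diag_of_list ds * transpose_mat P) $$ (i,j) = (\<Sum>k<n. P$$(i,k) * ds!k * P$$(j,k))"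
proof -
  have D: "diag_of_list ds \<in> carrier_mat n n" using l by auto
  have PD: "(P * diag_of_list ds) $$ (i,k) = P$$(i,k) * ds!k" if k: "k < n" for k
  proof -
    have "(P * diag_of_list ds) $$ (i,k) = (\<Sum>l<n. if l = k then P$$(i,l) * ds!l else 0)"
      unfolding index_mult_mat_sum[OF P D i k]
      by (intro sum.cong refl) (use l k in \<open>auto simp: diag_of_list_def\<close>)
    thus ?thesis using k by (simp add: sum.delta')
  qed
  have "(P * diag_of_list ds * transpose_mat P) $$ (i,j)
      = (\<Sum>k<n. (P * diag_of_list ds)$$(i,k) * transpose_mat P $$ (k,j))"
    by (rule index_mult_mat_sum) (use P D i j in auto)
  also have "\<dots> = (\<Sum>k<n. P$$(i,k) * ds!k * P$$(j,k))"
    by (intro sum.cong refl) (use P j in \<open>simp add: PD\<close>)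
  finally show ?thesis .
qed

lemma char_poly_diag_of_list: "char_poly (diag_of_list ds) = (\<Prod>a\<leftarrow>ds. [:-a,1:])"
proof -
  have "char_poly (diag_of_list ds) = (\<Prod>a\<leftarrow>diag_mat (diag_of_list ds). [:-a,1:])"
    by (rule char_poly_upper_triangular[OF diag_of_list_carrier])
      (auto simp: upper_triangular_def diag_of_list_def)
  also have "diag_mat (diag_of_list ds) = ds"
    by (rule nth_equalityI) (auto simp: diag_mat_def diag_of_list_def)
  finally show ?thesis .
qed

lemma sym_mat_deflation:
  fixes A :: "real mat"
  assumes A: "A \<in> carrier_mat n n" and sym: "\<And>i j. i<n \<Longrightarrow> j<n \<Longrightarrow> A $$ (i,j) = A $$ (j,i)"
    and n: "0 < n"
  obtains H \<mu> where "H \<in> carrier_mat n n" "transpose_mat H = H" "H * H = 1\<^sub>m n"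
    "\<And>i. i < n \<Longrightarrow> (H * A * H) $$ (i,0) = (if i = 0 then \<mu> else 0)"
    "\<And>i j. i < n \<Longrightarrow> j < n \<Longrightarrow> (H * A * H) $$ (i,j) = (H * A * H) $$ (j,i)"
proof -
  obtain \<mu> where "eigenvalue A \<mu>" using real_sym_mat_real_eigenvalue[OF A sym n] by blast
  then obtain v where vc: "v \<in> carrier_vec n" and vv: "v \<bullet> v = 1" and Av: "A *\<^sub>v v = \<mu> \<cdot>\<^sub>v v"
    using unit_eigenvector[OF A] by blast
  obtain H where Hc: "H \<in> carrier_mat n n" and HT: "transpose_mat H = H" and HH: "H * H = 1\<^sub>m n"
    and He: "H *\<^sub>v unit_vec n 0 = v"
    using householder_reflection[OF vc vv n] by blast
  have "transpose_mat (H * A * H) = transpose_mat H * transpose_mat A * transpose_mat H"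
    using Hc A by (simp add: transpose_mult[of _ n n _ n] assoc_mult_mat[of _ n n _ n _ n])
  also have "transpose_mat A = A" using A sym by (intro eq_matI) auto
  finally have sym': "transpose_mat (H * A * H) = H * A * H" unfolding HT .
  have "H *\<^sub>v v = unit_vec n 0"
    unfolding He[symmetric] using Hc by (simp flip: assoc_mult_mat_vec add: HH)
  have "(H * A * H) *\<^sub>v unit_vec n 0 = H *\<^sub>v (A *\<^sub>v (H *\<^sub>v unit_vec n 0))"
    using Hc A by (simp add: assoc_mult_mat_vec[of _ n n _ n])
  also have "\<dots> = \<mu> \<cdot>\<^sub>v unit_vec n 0"
    unfolding He Av using Hc vc \<open>H *\<^sub>v v = unit_vec n 0\<close> by (simp add: mult_mat_vec)
  finally have "(H * A * H) *\<^sub>v unit_vec n 0 = \<mu> \<cdot>\<^sub>v unit_vec n 0" .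
  hence "(H * A * H) $$ (i,0) = (if i = 0 then \<mu> else 0)" if "i < n" for i
    using index_mult_mat_unit_vec_0[of "H * A * H" n i] arg_cong[of _ _ "\<lambda>x. x $ i"] Hc A that
    by (cases "i = 0") auto
  moreover have "(H * A * H) $$ (i,j) = (H * A * H) $$ (j,i)" if "i < n" "j < n" for i j
    using arg_cong[OF sym', of "\<lambda>M. M $$ (j,i)"] that Hc A by simp
  ultimately show thesis using that Hc HT HH by blast
qed

lemma orthogonal_bordering:
  assumes P: "P \<in> carrier_mat m m" "transpose_mat P * P = 1\<^sub>m m" and ds: "length ds = m"
    and B: "B \<in> carrier_mat (Suc m) (Suc m)"
    and col0: "\<And>i. i < Suc m \<Longrightarrow> B $$ (i,0) = (if i = 0 then \<mu> else 0)"
    and row0: "\<And>j. j < Suc m \<Longrightarrow> B $$ (0,j) = (if j = 0 then \<mu> else 0)"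
    and block: "\<And>i j. i < m \<Longrightarrow> j < m \<Longrightarrow>
       B $$ (Suc i, Suc j) = (P * diag_of_list ds * transpose_mat P) $$ (i,j)"
  shows "\<exists>Q. Q \<in> carrier_mat (Suc m) (Suc m) \<and> transpose_mat Q * Q = 1\<^sub>m (Suc m)
           \<and> B = Q * diag_of_list (\<mu> # ds) * transpose_mat Q"
proof -
  define n where "n = Suc m"
  define Q where "Q = mat n n (\<lambda>(i,j). if i = 0 \<or> j = 0 then (if i = j then 1 else 0)
      else P $$ (i - 1, j - 1))"
  have Qc: "Q \<in> carrier_mat n n" unfolding Q_def by simp
  have Q0: "\<And>j. j < n \<Longrightarrow> Q $$ (0,j) = (if j = 0 then 1 else 0)"
    and Q0': "\<And>i. i < n \<Longrightarrow> Q $$ (i,0) = (if i = 0 then 1 else 0)"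
    and QS: "\<And>i j. i < m \<Longrightarrow> j < m \<Longrightarrow> Q $$ (Suc i, Suc j) = P $$ (i,j)"
    unfolding Q_def n_def by auto
  have "(transpose_mat Q * Q) $$ (i,j) = 1\<^sub>m n $$ (i,j)" if i: "i < n" and j: "j < n" for i j
  proof -
    have "(transpose_mat Q * Q) $$ (i,j) = (\<Sum>k<Suc m. Q$$(k,i) * Q$$(k,j))"
      using index_mult_mat_sum[of "transpose_mat Q" n n Q n i j] Qc i j by (simp add: n_def)
    also have "\<dots> = Q$$(0,i) * Q$$(0,j) + (\<Sum>k<m. Q$$(Suc k,i) * Q$$(Suc k,j))"
      by (rule sum.lessThan_Suc_shift)
    also have "\<dots> = 1\<^sub>m n $$ (i,j)"
    proof (cases "i = 0 \<or> j = 0")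
      case True thus ?thesis using i j Q0 Q0' by (auto simp: n_def)
    next
      case False
      then obtain i' j' where ij: "i = Suc i'" "j = Suc j'" "i' < m" "j' < m"
        using i j unfolding n_def by (metis Suc_less_SucD not0_implies_Suc)
      have "(\<Sum>k<m. Q$$(Suc k,i) * Q$$(Suc k,j)) = (transpose_mat P * P) $$ (i',j')"
        using index_mult_mat_sum[of "transpose_mat P" m m P m i' j'] P ij by (simp add: QS)
      thus ?thesis using ij P Q0 by (simp add: n_def)
    qed
    finally show ?thesis .
  qed
  hence QO: "transpose_mat Q * Q = 1\<^sub>m n" using Qc by (intro eq_matI) auto
  have lds: "length (\<mu> # ds) = n" unfolding n_def using ds by simp
  have "B $$ (i,j) = (Q * diag_of_list (\<mu> # ds) * transpose_mat Q) $$ (i,j)"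
    if i: "i < n" and j: "j < n" for i j
  proof -
    have "(Q * diag_of_list (\<mu> # ds) * transpose_mat Q) $$ (i,j)
        = (\<Sum>k<Suc m. Q$$(i,k) * (\<mu> # ds)!k * Q$$(j,k))"
      unfolding index_conjugate_diag_of_list[OF Qc lds i j] n_def ..
    also have "\<dots> = Q$$(i,0) * \<mu> * Q$$(j,0) + (\<Sum>k<m. Q$$(i,Suc k) * ds!k * Q$$(j,Suc k))"
      unfolding sum.lessThan_Suc_shift by simp
    also have "\<dots> = B $$ (i,j)"
    proof (cases "i = 0 \<or> j = 0")
      case True thus ?thesis using i j Q0 Q0' col0 row0 by (auto simp: n_def)
    next
      case False
      then obtain i' j' where ij: "i = Suc i'" "j = Suc j'" "i' < m" "j' < m"
        using i j unfolding n_def by (metis Suc_less_SucD not0_implies_Suc)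
      have "(\<Sum>k<m. Q$$(i,Suc k) * ds!k * Q$$(j,Suc k)) = (P * diag_of_list ds * transpose_mat P) $$ (i',j')"
        unfolding index_conjugate_diag_of_list[OF P(1) ds ij(3,4)] using ij by (simp add: QS)
      thus ?thesis using ij Q0' block by (simp add: n_def)
    qed
    finally show ?thesis by simp
  qed
  hence "B = Q * diag_of_list (\<mu> # ds) * transpose_mat Q"
    using B Qc lds by (intro eq_matI) (auto simp: n_def)
  thus ?thesis using Qc QO unfolding n_def by blast
qed

theorem real_sym_mat_orthogonal_diagonalization:
  fixes A :: "real mat"
  assumes "A \<in> carrier_mat n n" "\<And>i j. i<n \<Longrightarrow> j<n \<Longrightarrow> A$$(i,j) = A$$(j,i)"
  shows "\<exists>P ds. P \<in> carrier_mat n n \<and> transpose_mat P * P = 1\<^sub>m n \<and> length ds = n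
           \<and> A = P * diag_of_list ds * transpose_mat P"
  using assms
proof (induction n arbitrary: A)
  case 0
  show ?case
    by (intro exI[of _ "1\<^sub>m 0"] exI[of _ "[]"]) (use 0 in \<open>auto intro!: eq_matI simp: diag_of_list_def\<close>)
next
  case (Suc m A)
  obtain H \<mu> where Hc: "H \<in> carrier_mat (Suc m) (Suc m)" and HT: "transpose_mat H = H"
    and HH: "H * H = 1\<^sub>m (Suc m)"
    and col0: "\<And>i. i < Suc m \<Longrightarrow> (H * A * H) $$ (i,0) = (if i = 0 then \<mu> else 0)"
    and sym: "\<And>i j. i < Suc m \<Longrightarrow> j < Suc m \<Longrightarrow> (H * A * H) $$ (i,j) = (H * A * H) $$ (j,i)"
    using sym_mat_deflation[OF Suc.prems] by blast
  define A' where "A' = mat m m (\<lambda>(i,j). (H * A * H) $$ (Suc i, Suc j))"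
  obtain P' ds where P': "P' \<in> carrier_mat m m" "transpose_mat P' * P' = 1\<^sub>m m"
    and ds: "length ds = m" and A': "A' = P' * diag_of_list ds * transpose_mat P'"
    using Suc.IH[of A'] sym unfolding A'_def by auto
  have row0: "(H * A * H) $$ (0,j) = (if j = 0 then \<mu> else 0)" if "j < Suc m" for j
    using sym[of 0 j] col0[of j] that by simp
  have block: "(H * A * H) $$ (Suc i, Suc j) = (P' * diag_of_list ds * transpose_mat P') $$ (i,j)"
    if "i < m" "j < m" for i j
    using that unfolding A'[symmetric] A'_def by simp
  obtain Q where Qc: "Q \<in> carrier_mat (Suc m) (Suc m)" and QO: "transpose_mat Q * Q = 1\<^sub>m (Suc m)"
    and HAH: "H * A * H = Q * diag_of_list (\<mu> # ds) * transpose_mat Q"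
    using orthogonal_bordering[OF P' ds _ col0 row0 block] Hc Suc.prems(1) by auto
  have P: "H * Q \<in> carrier_mat (Suc m) (Suc m)" using Hc Qc by simp
  have "transpose_mat (H * Q) * (H * Q) = transpose_mat Q * ((H * H) * Q)"
    using Hc Qc by (simp add: transpose_mult[OF Hc Qc] HT assoc_mult_mat[of _ "Suc m" "Suc m" _ "Suc m" _ "Suc m"])
  also have "\<dots> = 1\<^sub>m (Suc m)" using Qc QO by (simp add: HH)
  finally have PO: "transpose_mat (H * Q) * (H * Q) = 1\<^sub>m (Suc m)" .
  have D: "diag_of_list (\<mu> # ds) \<in> carrier_mat (Suc m) (Suc m)"
    using diag_of_list_carrier[of "\<mu> # ds"] ds by simp
  have "H * Q * diag_of_list (\<mu> # ds) * transpose_mat (H * Q) = H * (H * A * H) * H"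
    using Hc Qc D
    by (simp add: HAH transpose_mult[OF Hc Qc] HT assoc_mult_mat[of _ "Suc m" "Suc m" _ "Suc m" _ "Suc m"])
  also have "\<dots> = (H * H) * A * (H * H)"
    using Hc Suc.prems(1) by (simp add: assoc_mult_mat[of _ "Suc m" "Suc m" _ "Suc m" _ "Suc m"])
  also have "\<dots> = A" using Suc.prems(1) by (simp add: HH)
  finally show ?case using P PO ds by (intro exI[of _ "H * Q"] exI[of _ "\<mu> # ds"]) auto
qed

section \<open>The adjacency form and the Rayleigh principle\<close>

definition adj_form :: "'a set \<Rightarrow> ('a \<Rightarrow> 'a \<Rightarrow> bool) \<Rightarrow> ('a \<Rightarrow> real) \<Rightarrow> real" where
  "adj_form S E f = (\<Sum>u\<in>S. \<Sum>w\<in>S. if E u w then f u * f w else 0)"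

definition sum_sq :: "'a set \<Rightarrow> ('a \<Rightarrow> real) \<Rightarrow> real" where
  "sum_sq S f = (\<Sum>u\<in>S. (f u)^2)"

definition spectral_basis ::
    "'a::linorder set \<Rightarrow> ('a \<Rightarrow> 'a \<Rightarrow> bool) \<Rightarrow> real list \<Rightarrow> (nat \<Rightarrow> 'a \<Rightarrow> real) \<Rightarrow> bool" where
  "spectral_basis S E ds \<phi> \<longleftrightarrow> length ds = card S \<and> spectrum_mset S E = mset ds \<and>
     (\<forall>i<card S. \<forall>j<card S. (\<Sum>u\<in>S. \<phi> i u * \<phi> j u) = (if i = j then 1 else 0)) \<and>
     (\<forall>f. adj_form S E f = (\<Sum>i<card S. ds!i * (\<Sum>u\<in>S. \<phi> i u * f u)^2)) \<and>
     (\<forall>f. sum_sq S f = (\<Sum>i<card S. (\<Sum>u\<in>S. \<phi> i u * f u)^2))"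

lemma sum_sorted_list_of_set:
  assumes "finite S"
  shows "(\<Sum>u\<in>S. g u) = (\<Sum>k<card S. g (sorted_list_of_set S ! k))"
proof -
  have "bij_betw ((!) (sorted_list_of_set S)) {..<card S} S"
    by (rule bij_betw_nth) (use assms in auto)
  thus ?thesis by (simp add: sum.reindex_bij_betw)
qed

lemma sum_swap_outer3:
  "(\<Sum>i\<in>A. \<Sum>k\<in>B. \<Sum>l\<in>C. F i k l) = (\<Sum>k\<in>B. \<Sum>l\<in>C. \<Sum>i\<in>A. F i k l)"
  by (rule trans[OF sum.swap]) (rule sum.cong[OF refl], rule sum.swap)

lemma proots_prod_linear: "proots (\<Prod>a\<leftarrow>ds. [:-a,1:]) = mset (ds :: real list)"
proof (induction ds)
  case (Cons a ds)
  have "monic (\<Prod>a\<leftarrow>ds. [:-a,1:] :: real poly)" by (rule monic_prod_list) auto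
  hence "(\<Prod>a\<leftarrow>ds. [:-a,1:]) \<noteq> (0 :: real poly)" by fastforce
  hence "proots ([:-a,1:] * (\<Prod>a\<leftarrow>ds. [:-a,1:])) = proots [:-a,1:] + proots (\<Prod>a\<leftarrow>ds. [:-a,1:])"
    by (intro proots_mult) auto
  thus ?case using Cons proots_linear_factor[of "-a"] by simp
qed simp

lemma spectrum_mset_orthogonal_conjugate:
  assumes P: "P \<in> carrier_mat (card S) (card S)" "transpose_mat P * P = 1\<^sub>m (card S)"
    and "adj_matrix S E = P * diag_of_list ds * transpose_mat P" and "length ds = card S"
  shows "spectrum_mset S E = mset ds"
proof -
  have PT: "transpose_mat P \<in> carrier_mat (card S) (card S)" using P by simp
  have "similar_mat_wit (adj_matrix S E) (diag_of_list ds) P (transpose_mat P)"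
    unfolding similar_mat_wit_def Let_def
    using assms PT mat_mult_left_right_inverse[OF PT P(1) P(2)] diag_of_list_carrier[of ds]
    by (auto simp: adj_matrix_def Let_def)
  hence "char_poly (adj_matrix S E) = char_poly (diag_of_list ds)"
    by (intro char_poly_similar) (auto simp: similar_mat_def)
  thus ?thesis by (simp add: spectrum_mset_def char_poly_diag_of_list proots_prod_linear)
qed

lemma spectral_basis_exists:
  fixes S :: "'a::linorder set"
  assumes fin: "finite S" and sym: "symp E"
  shows "\<exists>ds \<phi>. spectral_basis S E ds \<phi>"
proof -
  define n where "n = card S"
  define vs where "vs = sorted_list_of_set S"
  have Aij: "adj_matrix S E $$ (i,j) = (if E (vs!i) (vs!j) then 1 else 0)" if "i<n" "j<n" for i j
    unfolding adj_matrix_def vs_def using that by (simp add: Let_def n_def)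
  have Ac: "adj_matrix S E \<in> carrier_mat n n" unfolding adj_matrix_def n_def by (simp add: Let_def)
  have "adj_matrix S E $$ (i,j) = adj_matrix S E $$ (j,i)" if "i<n" "j<n" for i j
    using that sym by (auto simp: Aij dest: sympD)
  then obtain P ds where Pc: "P \<in> carrier_mat n n" and PTP: "transpose_mat P * P = 1\<^sub>m n"
    and lds: "length ds = n" and A: "adj_matrix S E = P * diag_of_list ds * transpose_mat P"
    using real_sym_mat_orthogonal_diagonalization[OF Ac] by blast
  have PTc: "transpose_mat P \<in> carrier_mat n n" using Pc by simp
  have PPT: "P * transpose_mat P = 1\<^sub>m n" by (rule mat_mult_left_right_inverse[OF PTc Pc PTP])
  have cols: "(\<Sum>k<n. P$$(k,i) * P$$(k,j)) = (if i = j then 1 else 0)" if "i<n" "j<n" for i j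
    using index_mult_mat_sum[OF PTc Pc that] that Pc arg_cong[OF PTP, of "\<lambda>M. M $$ (i,j)"] by simp
  have rows: "(\<Sum>i<n. P$$(k,i) * P$$(l,i)) = (if k = l then 1 else 0)" if "k<n" "l<n" for k l
    using index_mult_mat_sum[OF Pc PTc that] that Pc arg_cong[OF PPT, of "\<lambda>M. M $$ (k,l)"] by simp
  txt \<open>Transport the columns of \<open>P\<close> to functions on \<open>S\<close> via the sorted enumeration \<open>vs\<close>.\<close>
  define \<phi> where "\<phi> i u = P $$ (the_inv_into {..<n} ((!) vs) u, i)" for i u
  have reindex: "(\<Sum>u\<in>S. g u) = (\<Sum>k<n. g (vs!k))" for g :: "'a \<Rightarrow> real"
    unfolding n_def vs_def by (rule sum_sorted_list_of_set[OF fin])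
  have "inj_on ((!) vs) {..<n}"
    using bij_betw_nth[of vs "{..<n}" S] fin unfolding vs_def n_def by (auto simp: bij_betw_def)
  hence \<phi>: "\<phi> i (vs!k) = P $$ (k, i)" if "k < n" for i k
    unfolding \<phi>_def using that by (simp add: the_inv_into_f_f)
  have coeff: "(\<Sum>u\<in>S. \<phi> i u * f u) = (\<Sum>k<n. P$$(k,i) * f (vs!k))" for i f
    unfolding reindex by (intro sum.cong refl) (simp add: \<phi>)
  have orth: "(\<Sum>u\<in>S. \<phi> i u * \<phi> j u) = (if i = j then 1 else 0)" if "i < n" "j < n" for i j
  proof -
    have "(\<Sum>u\<in>S. \<phi> i u * \<phi> j u) = (\<Sum>k<n. P$$(k,i) * P$$(k,j))"
      unfolding coeff by (intro sum.cong refl) (simp add: \<phi>)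
    thus ?thesis using cols[OF that] by simp
  qed
  have form: "adj_form S E f = (\<Sum>i<n. ds!i * (\<Sum>u\<in>S. \<phi> i u * f u)^2)" for f
  proof -
    have "adj_form S E f = (\<Sum>k<n. \<Sum>l<n. adj_matrix S E $$ (k,l) * f (vs!k) * f (vs!l))"
      unfolding adj_form_def reindex by (intro sum.cong refl) (simp add: Aij)
    also have "\<dots> = (\<Sum>k<n. \<Sum>l<n. \<Sum>i<n. ds!i * (P$$(k,i) * f (vs!k)) * (P$$(l,i) * f (vs!l)))"
      unfolding A by (intro sum.cong refl)
        (simp add: index_conjugate_diag_of_list[OF Pc lds] sum_distrib_left sum_distrib_right mult_ac)
    also have "\<dots> = (\<Sum>i<n. \<Sum>k<n. \<Sum>l<n. ds!i * (P$$(k,i) * f (vs!k)) * (P$$(l,i) * f (vs!l)))"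
      by (rule sum_swap_outer3[symmetric])
    also have "\<dots> = (\<Sum>i<n. ds!i * (\<Sum>k<n. P$$(k,i) * f (vs!k))^2)"
      by (simp add: power2_eq_square sum_product sum_distrib_left mult_ac)
    finally show ?thesis unfolding coeff .
  qed
  have norm: "sum_sq S f = (\<Sum>i<n. (\<Sum>u\<in>S. \<phi> i u * f u)^2)" for f
  proof -
    have "(\<Sum>i<n. (\<Sum>k<n. P$$(k,i) * f (vs!k))^2)
        = (\<Sum>i<n. \<Sum>k<n. \<Sum>l<n. P$$(k,i) * P$$(l,i) * (f (vs!k) * f (vs!l)))"
      unfolding power2_eq_square sum_product by (intro sum.cong refl) (simp add: mult_ac)
    also have "\<dots> = (\<Sum>k<n. \<Sum>l<n. \<Sum>i<n. P$$(k,i) * P$$(l,i) * (f (vs!k) * f (vs!l)))"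
      by (rule sum_swap_outer3)
    also have "\<dots> = (\<Sum>k<n. \<Sum>l<n. (\<Sum>i<n. P$$(k,i) * P$$(l,i)) * (f (vs!k) * f (vs!l)))"
      by (simp add: sum_distrib_right)
    also have "\<dots> = (\<Sum>k<n. \<Sum>l<n. if k = l then f (vs!k) * f (vs!l) else 0)"
      by (intro sum.cong refl) (simp add: rows)
    also have "\<dots> = (\<Sum>k<n. (f (vs!k))^2)"
      by (intro sum.cong refl) (simp add: power2_eq_square)
    finally show ?thesis unfolding coeff sum_sq_def reindex by simp
  qed
  have "spectrum_mset S E = mset ds"
    using spectrum_mset_orthogonal_conjugate[of P S E ds] Pc PTP A lds unfolding n_def by blast
  thus ?thesis using lds orth form norm unfolding spectral_basis_def n_def by blast
qed

lemma spectral_basisD: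
  assumes "spectral_basis S E ds \<phi>"
  shows "length ds = card S" and "spectrum_mset S E = mset ds"
    and "\<And>i j. i < card S \<Longrightarrow> j < card S \<Longrightarrow> (\<Sum>u\<in>S. \<phi> i u * \<phi> j u) = (if i = j then 1 else 0)"
    and "\<And>f. adj_form S E f = (\<Sum>i<card S. ds!i * (\<Sum>u\<in>S. \<phi> i u * f u)^2)"
    and "\<And>f. sum_sq S f = (\<Sum>i<card S. (\<Sum>u\<in>S. \<phi> i u * f u)^2)"
  using assms unfolding spectral_basis_def by auto

lemma spectral_basis_eigenfunction:
  assumes B: "spectral_basis S E ds \<phi>" and i: "i < card S"
  shows "sum_sq S (\<phi> i) = 1" and "adj_form S E (\<phi> i) = ds!i"
proof -
  note D = spectral_basisD[OF B]
  have "sum_sq S (\<phi> i) = (\<Sum>k<card S. if k = i then 1 else 0)"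
    unfolding D(5) by (intro sum.cong refl) (simp add: D(3) i)
  thus "sum_sq S (\<phi> i) = 1" using i by simp
  have "adj_form S E (\<phi> i) = (\<Sum>k<card S. if k = i then ds!k else 0)"
    unfolding D(4) by (intro sum.cong refl) (simp add: D(3) i)
  thus "adj_form S E (\<phi> i) = ds!i" using i by simp
qed

lemma spectral_basis_pair:
  fixes a b :: real
  assumes B: "spectral_basis S E ds \<phi>" and ij: "i < card S" "j < card S" "i \<noteq> j"
  defines "h \<equiv> \<lambda>u. a * \<phi> i u + b * \<phi> j u"
  shows "sum_sq S h = a^2 + b^2" and "adj_form S E h = a^2 * ds!i + b^2 * ds!j"
proof -
  note D = spectral_basisD[OF B]
  have c: "(\<Sum>u\<in>S. \<phi> k u * h u) = (if k = i then a else 0) + (if k = j then b else 0)"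
    if "k < card S" for k
  proof -
    have "(\<Sum>u\<in>S. \<phi> k u * h u) = a * (\<Sum>u\<in>S. \<phi> k u * \<phi> i u) + b * (\<Sum>u\<in>S. \<phi> k u * \<phi> j u)"
      unfolding h_def by (simp add: sum.distrib sum_distrib_left mult_ac distrib_left)
    thus ?thesis using D(3)[OF that ij(1)] D(3)[OF that ij(2)] by simp
  qed
  have sq: "((if k = i then a else 0) + (if k = j then b else 0))^2
      = (if k = i then a^2 else 0) + (if k = j then b^2 else 0)" for k
    using ij by auto
  have "sum_sq S h = (\<Sum>k<card S. (if k = i then a^2 else 0) + (if k = j then b^2 else 0))"
    unfolding D(5) by (intro sum.cong refl) (simp only: c sq lessThan_iff)
  thus "sum_sq S h = a^2 + b^2" using ij by (simp add: sum.distrib)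
  have "adj_form S E h
      = (\<Sum>k<card S. (if k = i then a^2 * ds!k else 0) + (if k = j then b^2 * ds!k else 0))"
    unfolding D(4) by (intro sum.cong refl) (simp add: c sq distrib_left)
  thus "adj_form S E h = a^2 * ds!i + b^2 * ds!j" using ij by (simp add: sum.distrib)
qed

lemma size_filter_mset_mset:
  "size (filter_mset P (mset ds)) = card {i. i < length ds \<and> P (ds!i)}"
  by (metis length_filter_conv_card mset_filter size_mset)

lemma two_eigenvalues_gt_imp_plane:
  fixes S :: "'a::linorder set"
  assumes "finite S" and "symp E"
    and two: "2 \<le> size (filter_mset (\<lambda>\<mu>. t < \<mu>) (spectrum_mset S E))"
  shows "\<exists>f g. \<forall>a b. (a,b) \<noteq> (0,0) \<longrightarrow>
           t * sum_sq S (\<lambda>u. a * f u + b * g u) < adj_form S E (\<lambda>u. a * f u + b * g u)"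
proof -
  obtain ds \<phi> where B: "spectral_basis S E ds \<phi>" using spectral_basis_exists[OF assms(1,2)] by blast
  hence "2 \<le> card {i. i < length ds \<and> t < ds!i}"
    using two unfolding spectral_basis_def size_filter_mset_mset[symmetric] by simp
  then obtain I where "I \<subseteq> {i. i < length ds \<and> t < ds!i}" "card I = 2"
    by (meson obtain_subset_with_card_n)
  then obtain i j where "i \<in> {i. i < length ds \<and> t < ds!i}" "j \<in> {i. i < length ds \<and> t < ds!i}" "i \<noteq> j"
    by (auto simp: card_2_iff)
  hence ij: "i < card S" "j < card S" "i \<noteq> j" and gt: "t < ds!i" "t < ds!j"
    using B unfolding spectral_basis_def by auto
  show ?thesis
  proof (intro exI allI impI)
    fix a b :: real assume ab: "(a,b) \<noteq> (0,0)"
    have "0 < a^2 * (ds!i - t) + b^2 * (ds!j - t)"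
    proof (cases "a = 0")
      case True
      hence "b \<noteq> 0" using ab by simp
      thus ?thesis using True gt by simp
    next
      case False
      hence "0 < a^2 * (ds!i - t)" using gt by simp
      moreover have "0 \<le> b^2 * (ds!j - t)" using gt by simp
      ultimately show ?thesis by linarith
    qed
    thus "t * sum_sq S (\<lambda>u. a * \<phi> i u + b * \<phi> j u) < adj_form S E (\<lambda>u. a * \<phi> i u + b * \<phi> j u)"
      unfolding spectral_basis_pair[OF B ij] by (simp add: algebra_simps)
  qed
qed

lemma plane_imp_two_eigenvalues_gt:
  fixes S :: "'a::linorder set"
  assumes "finite S" and "symp E"
    and plane: "\<forall>a b. (a,b) \<noteq> (0,0) \<longrightarrow>
           t * sum_sq S (\<lambda>u. a * f u + b * g u) < adj_form S E (\<lambda>u. a * f u + b * g u)"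
  shows "2 \<le> size (filter_mset (\<lambda>\<mu>. t < \<mu>) (spectrum_mset S E))"
proof (rule ccontr)
  obtain ds \<phi> where B: "spectral_basis S E ds \<phi>" using spectral_basis_exists[OF assms(1,2)] by blast
  note D = spectral_basisD[OF B]
  define I where "I = {i. i < length ds \<and> t < ds!i}"
  assume "\<not> 2 \<le> size (filter_mset (\<lambda>\<mu>. t < \<mu>) (spectrum_mset S E))"
  hence "card I \<le> Suc 0" unfolding D(2) size_filter_mset_mset I_def by simp
  hence "\<forall>k\<in>I. \<forall>l\<in>I. k = l" by (subst card_le_Suc0_iff_eq[symmetric]) (auto simp: I_def)
  then obtain i0 where "\<forall>k\<in>I. k = i0" by (cases "I = {}") auto
  hence i0: "ds!k \<le> t" if "k < card S" "k \<noteq> i0" for k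
    using that D(1) unfolding I_def by (metis (mono_tags, lifting) mem_Collect_eq not_le)
  txt \<open>A nonzero combination orthogonal to the \<open>i0\<close>-th eigenfunction has Rayleigh quotient at most \<open>t\<close>.\<close>
  define cf where "cf = (\<Sum>u\<in>S. \<phi> i0 u * f u)"
  define cg where "cg = (\<Sum>u\<in>S. \<phi> i0 u * g u)"
  define a where "a = (if cf = 0 \<and> cg = 0 then 1 else cg)"
  define b where "b = (if cf = 0 \<and> cg = 0 then 0 else - cf)"
  define h where "h = (\<lambda>u. a * f u + b * g u)"
  have ab: "(a,b) \<noteq> (0,0)" unfolding a_def b_def by auto
  have "(\<Sum>u\<in>S. \<phi> i0 u * h u) = a * cf + b * cg"
    unfolding h_def cf_def cg_def by (simp add: sum.distrib sum_distrib_left algebra_simps)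
  also have "\<dots> = 0" unfolding a_def b_def by auto
  finally have h0: "(\<Sum>u\<in>S. \<phi> i0 u * h u) = 0" .
  have "ds!k * (\<Sum>u\<in>S. \<phi> k u * h u)^2 \<le> t * (\<Sum>u\<in>S. \<phi> k u * h u)^2"
    if "k < card S" for k
    using i0[OF that] h0 by (cases "k = i0") (simp_all add: mult_right_mono)
  hence "adj_form S E h \<le> (\<Sum>k<card S. t * (\<Sum>u\<in>S. \<phi> k u * h u)^2)"
    unfolding D(4) by (intro sum_mono) simp
  also have "\<dots> = t * sum_sq S h" unfolding D(5) by (simp add: sum_distrib_left)
  moreover have "t * sum_sq S h < adj_form S E h" using plane ab unfolding h_def by blast
  ultimately show False by linarith
qed

lemma rev_sorted_list_of_multiset_nth_0:
  assumes "M \<noteq> {#}"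
  shows "rev (sorted_list_of_multiset M) ! 0 = Max_mset M"
proof -
  define xs where "xs = sorted_list_of_multiset M"
  have "mset xs = M" "sorted xs" unfolding xs_def by simp_all
  hence xs: "sorted xs" "set xs = set_mset M" "xs \<noteq> []"
    using assms by auto
  have "y \<le> last xs" if "y \<in> set xs" for y
  proof -
    obtain k where "k < length xs" "xs ! k = y" using \<open>y \<in> set xs\<close> by (auto simp: in_set_conv_nth)
    thus ?thesis using sorted_nth_mono[OF xs(1), of k "length xs - 1"] xs(3) by (simp add: last_conv_nth)
  qed
  hence "Max_mset M = last xs" using xs by (intro Max_eqI) auto
  thus ?thesis using xs unfolding xs_def by (simp add: rev_nth last_conv_nth)
qed

lemma rev_sorted_list_of_multiset_nth_1_gt:
  assumes two: "2 \<le> size (filter_mset (\<lambda>\<mu>. t < \<mu>) M)"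
  shows "t < rev (sorted_list_of_multiset M) ! 1"
proof (rule ccontr)
  define xs where "xs = sorted_list_of_multiset M"
  define n where "n = length xs"
  have xs: "sorted xs" "mset xs = M" unfolding xs_def by auto
  have two': "2 \<le> length (filter (\<lambda>\<mu>. t < \<mu>) xs)" using two xs(2) by (metis mset_filter size_mset)
  hence n2: "2 \<le> n" unfolding n_def using length_filter_le le_trans by blast
  assume "\<not> t < rev (sorted_list_of_multiset M) ! 1"
  hence le: "xs ! (n - 2) \<le> t" using n2 unfolding xs_def n_def by (simp add: rev_nth numeral_2_eq_2)
  txt \<open>Then only the last entry of the sorted list can exceed \<open>t\<close>.\<close>
  have "y \<le> t" if y: "y \<in> set (take (n - 1) xs)" for y
  proof -
    obtain k where "k < length (take (n - 1) xs)" "take (n - 1) xs ! k = y"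
      using y by (auto simp: in_set_conv_nth)
    hence "k < n - 1" "y = xs ! k" unfolding n_def by auto
    moreover have "xs ! k \<le> xs ! (n - 2)"
      using sorted_nth_mono[OF xs(1), of k "n - 2"] \<open>k < n - 1\<close> n2 unfolding n_def by simp
    ultimately show ?thesis using le by simp
  qed
  hence "filter (\<lambda>\<mu>. t < \<mu>) (take (n - 1) xs) = []" by (force simp: filter_empty_conv)
  hence "filter (\<lambda>\<mu>. t < \<mu>) xs = filter (\<lambda>\<mu>. t < \<mu>) (drop (n - 1) xs)"
    by (metis append_Nil append_take_drop_id filter_append)
  hence "length (filter (\<lambda>\<mu>. t < \<mu>) xs) \<le> length (drop (n - 1) xs)"
    by (metis length_filter_le)
  also have "\<dots> = 1" using n2 unfolding n_def by simp
  finally show False using two' by simp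
qed

lemma graph_index_Max_mset:
  fixes S :: "'a::linorder set"
  assumes "finite S" and "symp E" and "S \<noteq> {}"
  shows "graph_index S E = Max_mset (spectrum_mset S E)"
    and "graph_index S E \<in># spectrum_mset S E"
proof -
  obtain ds \<phi> where "spectral_basis S E ds \<phi>"
    using spectral_basis_exists[OF assms(1,2)] by blast
  hence "spectrum_mset S E \<noteq> {#}"
    using assms(1,3) by (auto simp: spectral_basis_def)
  thus "graph_index S E = Max_mset (spectrum_mset S E)"
    unfolding graph_index_def eigs_def by (rule rev_sorted_list_of_multiset_nth_0)
  thus "graph_index S E \<in># spectrum_mset S E"
    using Max_in_mset \<open>spectrum_mset S E \<noteq> {#}\<close> by simp
qed

lemma adj_form_le_graph_index:
  fixes S :: "'a::linorder set"
  assumes "finite S" and "symp E" and "S \<noteq> {}"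
  shows "adj_form S E f \<le> graph_index S E * sum_sq S f"
proof -
  obtain ds \<phi> where B: "spectral_basis S E ds \<phi>"
    using spectral_basis_exists[OF assms(1,2)] by blast
  note D = spectral_basisD[OF B]
  have "graph_index S E = Max (set ds)" using graph_index_Max_mset(1)[OF assms] D(2) by simp
  hence "ds!i \<le> graph_index S E" if "i < card S" for i
    using that D(1) by simp
  hence "adj_form S E f \<le> (\<Sum>i<card S. graph_index S E * (\<Sum>u\<in>S. \<phi> i u * f u)^2)"
    unfolding D(4) by (intro sum_mono mult_right_mono) auto
  thus ?thesis unfolding D(5) by (simp add: sum_distrib_left)
qed

lemma eigenvalue_rayleigh_attained:
  fixes S :: "'a::linorder set"
  assumes "finite S" and "symp E" and "\<mu> \<in># spectrum_mset S E"
  shows "\<exists>f. sum_sq S f = 1 \<and> adj_form S E f = \<mu>"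
proof -
  obtain ds \<phi> where B: "spectral_basis S E ds \<phi>"
    using spectral_basis_exists[OF assms(1,2)] by blast
  then obtain i where "i < card S" "ds!i = \<mu>"
    using assms(3) by (auto simp: spectral_basis_def in_set_conv_nth)
  thus ?thesis using spectral_basis_eigenfunction[OF B] by blast
qed

definition rayleigh_exceeds :: "'a set \<Rightarrow> ('a \<Rightarrow> 'a \<Rightarrow> bool) \<Rightarrow> real \<Rightarrow> bool" where
  "rayleigh_exceeds S E t \<longleftrightarrow> (\<exists>f. t * sum_sq S f < adj_form S E f)"

lemma rayleigh_exceeds_iff_graph_index:
  fixes S :: "'a::linorder set"
  assumes "finite S" and "symp E" and "S \<noteq> {}"
  shows "rayleigh_exceeds S E t \<longleftrightarrow> t < graph_index S E"
proof
  assume "rayleigh_exceeds S E t"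
  then obtain f where f: "t * sum_sq S f < adj_form S E f" unfolding rayleigh_exceeds_def by blast
  show "t < graph_index S E"
  proof (rule ccontr)
    assume "\<not> t < graph_index S E"
    moreover have "0 \<le> sum_sq S f" unfolding sum_sq_def by (simp add: sum_nonneg)
    ultimately have "graph_index S E * sum_sq S f \<le> t * sum_sq S f" by (simp add: mult_right_mono)
    thus False using f adj_form_le_graph_index[OF assms, where f = f] by linarith
  qed
next
  assume "t < graph_index S E"
  moreover obtain f where "sum_sq S f = 1" "adj_form S E f = graph_index S E"
    using eigenvalue_rayleigh_attained[OF assms(1,2) graph_index_Max_mset(2)[OF assms]] by blast
  ultimately show "rayleigh_exceeds S E t" unfolding rayleigh_exceeds_def by (intro exI[of _ f]) simp
qed

lemma not_rayleigh_exceeds_empty: "\<not> rayleigh_exceeds {} E t"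
  unfolding rayleigh_exceeds_def adj_form_def sum_sq_def by simp

lemma not_rayleigh_exceeds_singleton:
  assumes "\<not> E v v" and "0 \<le> t"
  shows "\<not> rayleigh_exceeds {v} E t"
  unfolding rayleigh_exceeds_def adj_form_def sum_sq_def using assms by (simp add: not_less)

lemma adj_form_extend_zero:
  assumes "finite S" "T \<subseteq> S"
  shows "adj_form S E (\<lambda>u. if u \<in> T then f u else 0) = adj_form T E f"
proof -
  have "adj_form S E (\<lambda>u. if u \<in> T then f u else 0)
      = (\<Sum>u\<in>T. \<Sum>w\<in>S. if E u w then (if u \<in> T then f u else 0) * (if w \<in> T then f w else 0) else 0)"
    unfolding adj_form_def by (rule sum.mono_neutral_right) (use assms in \<open>auto intro!: sum.neutral\<close>)
  also have "\<dots> = adj_form T E f"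
    unfolding adj_form_def by (intro sum.cong refl sum.mono_neutral_cong_right) (use assms in auto)
  finally show ?thesis .
qed

lemma sum_sq_extend_zero:
  assumes "finite S" "T \<subseteq> S"
  shows "sum_sq S (\<lambda>u. if u \<in> T then f u else 0) = sum_sq T f"
  unfolding sum_sq_def using assms by (intro sum.mono_neutral_cong_right) auto

lemma second_eig_gt_of_subset:
  fixes V :: "'a::linorder set"
  assumes fin: "finite V" and sym: "symp E" and MV: "M \<subseteq> V"
    and two: "2 \<le> size (filter_mset (\<lambda>\<mu>. t < \<mu>) (spectrum_mset M E))"
  shows "t < second_eig V E"
proof -
  obtain f g where fg: "\<forall>a b. (a,b) \<noteq> (0,0) \<longrightarrow>
      t * sum_sq M (\<lambda>u. a * f u + b * g u) < adj_form M E (\<lambda>u. a * f u + b * g u)"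
    using two_eigenvalues_gt_imp_plane[OF finite_subset[OF MV fin] sym two] by blast
  define F where "F u = (if u \<in> M then f u else 0)" for u
  define G where "G u = (if u \<in> M then g u else 0)" for u
  have "(\<lambda>u. a * F u + b * G u) = (\<lambda>u. if u \<in> M then a * f u + b * g u else 0)" for a b
    unfolding F_def G_def by auto
  hence "\<forall>a b. (a,b) \<noteq> (0,0) \<longrightarrow>
      t * sum_sq V (\<lambda>u. a * F u + b * G u) < adj_form V E (\<lambda>u. a * F u + b * G u)"
    using fg by (simp add: adj_form_extend_zero[OF fin MV] sum_sq_extend_zero[OF fin MV])
  hence "2 \<le> size (filter_mset (\<lambda>\<mu>. t < \<mu>) (spectrum_mset V E))"
    by (rule plane_imp_two_eigenvalues_gt[OF fin sym])
  thus ?thesis unfolding second_eig_def eigs_def by (rule rev_sorted_list_of_multiset_nth_1_gt)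
qed

lemma second_eig_gt_of_separated:
  fixes V :: "'a::linorder set"
  assumes fin: "finite V" and sym: "symp E"
    and T: "T1 \<subseteq> V" "T2 \<subseteq> V" "T1 \<inter> T2 = {}"
    and nadj: "\<And>u w. u \<in> T1 \<Longrightarrow> w \<in> T2 \<Longrightarrow> \<not> E u w"
    and R: "rayleigh_exceeds T1 E t" "rayleigh_exceeds T2 E t"
  shows "t < second_eig V E"
proof -
  obtain f1 f2 where f1: "t * sum_sq T1 f1 < adj_form T1 E f1" and f2: "t * sum_sq T2 f2 < adj_form T2 E f2"
    using R unfolding rayleigh_exceeds_def by blast
  define F1 where "F1 u = (if u \<in> T1 then f1 u else 0)" for u
  define F2 where "F2 u = (if u \<in> T2 then f2 u else 0)" for u
  have Q: "adj_form V E F1 = adj_form T1 E f1" "adj_form V E F2 = adj_form T2 E f2"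
    unfolding F1_def F2_def by (simp_all add: adj_form_extend_zero[OF fin] T)
  have N: "sum_sq V F1 = sum_sq T1 f1" "sum_sq V F2 = sum_sq T2 f2"
    unfolding F1_def F2_def by (simp_all add: sum_sq_extend_zero[OF fin] T)
  txt \<open>Both the form and the norm are additive on functions with separated supports.\<close>
  have cross: "F1 u * F2 w = 0" "F2 u * F1 w = 0" if "E u w" for u w
    using that nadj sym unfolding F1_def F2_def by (auto dest: sympD)
  have disj: "F1 u * F2 u = 0" for u using T(3) unfolding F1_def F2_def by auto
  have "t * sum_sq V (\<lambda>u. a * F1 u + b * F2 u) < adj_form V E (\<lambda>u. a * F1 u + b * F2 u)"
    if ab: "(a,b) \<noteq> (0,0)" for a b
  proof -
    have "adj_form V E (\<lambda>u. a * F1 u + b * F2 u) = a^2 * adj_form V E F1 + b^2 * adj_form V E F2"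
      unfolding adj_form_def sum_distrib_left sum.distrib[symmetric]
    proof (intro sum.cong refl)
      fix u w
      have "(a * F1 u + b * F2 u) * (a * F1 w + b * F2 w) = a^2 * (F1 u * F1 w) + b^2 * (F2 u * F2 w)
          + a * b * (F1 u * F2 w) + a * b * (F2 u * F1 w)"
        by (simp add: algebra_simps power2_eq_square)
      thus "(if E u w then (a * F1 u + b * F2 u) * (a * F1 w + b * F2 w) else 0)
          = a^2 * (if E u w then F1 u * F1 w else 0) + b^2 * (if E u w then F2 u * F2 w else 0)"
        by (simp add: cross)
    qed
    moreover have "sum_sq V (\<lambda>u. a * F1 u + b * F2 u) = a^2 * sum_sq V F1 + b^2 * sum_sq V F2"
      unfolding sum_sq_def sum_distrib_left sum.distrib[symmetric]
      by (intro sum.cong refl) (simp add: power2_eq_square algebra_simps disj[simplified mult.commute] disj)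
    moreover have "0 < a^2 * (adj_form T1 E f1 - t * sum_sq T1 f1) + b^2 * (adj_form T2 E f2 - t * sum_sq T2 f2)"
    proof (cases "a = 0")
      case True
      hence "b \<noteq> 0" using ab by simp
      thus ?thesis using True f2 by simp
    next
      case False
      hence "0 < a^2 * (adj_form T1 E f1 - t * sum_sq T1 f1)" using f1 by simp
      moreover have "0 \<le> b^2 * (adj_form T2 E f2 - t * sum_sq T2 f2)" using f2 by simp
      ultimately show ?thesis by linarith
    qed
    ultimately show ?thesis unfolding Q N by (simp add: algebra_simps)
  qed
  hence "2 \<le> size (filter_mset (\<lambda>\<mu>. t < \<mu>) (spectrum_mset V E))"
    by (intro plane_imp_two_eigenvalues_gt[OF fin sym, where f = F1 and g = F2]) blast
  thus ?thesis unfolding second_eig_def eigs_def by (rule rev_sorted_list_of_multiset_nth_1_gt)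
qed

lemma adj_form_abs_ge: "- adj_form S E f \<le> adj_form S E (\<lambda>u. \<bar>f u\<bar>)"
proof -
  have "- adj_form S E f = (\<Sum>u\<in>S. \<Sum>w\<in>S. if E u w then - (f u * f w) else 0)"
    unfolding adj_form_def by (simp add: sum_negf[symmetric] if_distrib cong: if_cong)
  also have "\<dots> \<le> adj_form S E (\<lambda>u. \<bar>f u\<bar>)" unfolding adj_form_def
    by (intro sum_mono) (auto simp: abs_mult[symmetric])
  finally show ?thesis .
qed

lemma cyclotomic_if_not_rayleigh_exceeds_2:
  fixes H :: "'a::linorder set"
  assumes fin: "finite H" and sym: "symp E" and not_exceeds: "\<not> rayleigh_exceeds H E 2"
  shows "cyclotomic H E"
  unfolding cyclotomic_def
proof
  fix \<mu> assume "\<mu> \<in># spectrum_mset H E"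
  then obtain f where f: "sum_sq H f = 1" "adj_form H E f = \<mu>"
    using eigenvalue_rayleigh_attained[OF fin sym] by blast
  have "\<mu> \<le> 2" using not_exceeds f unfolding rayleigh_exceeds_def by (metis mult.right_neutral not_le)
  moreover have "- \<mu> \<le> 2"
  proof -
    have "sum_sq H (\<lambda>u. \<bar>f u\<bar>) = 1" using f unfolding sum_sq_def by simp
    hence "adj_form H E (\<lambda>u. \<bar>f u\<bar>) \<le> 2"
      using not_exceeds unfolding rayleigh_exceeds_def by (metis mult.right_neutral not_le)
    thus ?thesis using adj_form_abs_ge[of H E f] f by linarith
  qed
  ultimately show "-2 \<le> \<mu> \<and> \<mu> \<le> 2" by linarith
qed

section \<open>The decomposition \<open>V = M \<union> A \<union> H\<close>\<close>

lemma card_eigenvalues_gt_eq_1: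
  fixes V :: "'a::linorder set"
  assumes fin: "finite V" and sym: "symp E" and MV: "M \<subseteq> V" and ne: "M \<noteq> {}"
    and gi: "t < graph_index M E" and se: "second_eig V E \<le> t"
  shows "size (filter_mset (\<lambda>\<mu>. \<mu> > t) (spectrum_mset M E)) = 1"
proof -
  have "graph_index M E \<in># filter_mset (\<lambda>\<mu>. \<mu> > t) (spectrum_mset M E)"
    using graph_index_Max_mset(2)[OF finite_subset[OF MV fin] sym ne] gi by simp
  hence "size (filter_mset (\<lambda>\<mu>. \<mu> > t) (spectrum_mset M E)) \<noteq> 0" by auto
  moreover have "\<not> 2 \<le> size (filter_mset (\<lambda>\<mu>. \<mu> > t) (spectrum_mset M E))"
    using second_eig_gt_of_subset[OF fin sym MV] se by fastforce
  ultimately show ?thesis by linarith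
qed

lemma simple_graphD:
  assumes "simple_graph V E"
  shows "finite V" and "symp E" and "\<not> E v v"
  using assms unfolding simple_graph_def by (auto intro: sympI)

lemma minimal_rayleigh_exceeds_subset:
  assumes "finite V" and "rayleigh_exceeds V E t"
  obtains M where "M \<subseteq> V" "rayleigh_exceeds M E t" "\<And>v. v \<in> M \<Longrightarrow> \<not> rayleigh_exceeds (M - {v}) E t"
proof -
  obtain M where MV: "M \<subseteq> V" and RM: "rayleigh_exceeds M E t"
    and min: "\<And>M'. M' \<subseteq> V \<Longrightarrow> rayleigh_exceeds M' E t \<Longrightarrow> card M \<le> card M'"
    using ex_has_least_nat[of "\<lambda>M. M \<subseteq> V \<and> rayleigh_exceeds M E t" V card] assms(2) by blast
  have "\<not> rayleigh_exceeds (M - {v}) E t" if "v \<in> M" for v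
  proof
    assume "rayleigh_exceeds (M - {v}) E t"
    hence "card M \<le> card (M - {v})" using min MV by blast
    moreover have "card (M - {v}) < card M"
      using card_Diff1_less[OF finite_subset[OF MV assms(1)] that] .
    ultimately show False by simp
  qed
  thus thesis using that MV RM by blast
qed

lemma not_rayleigh_exceeds_beyond_neighbourhood:
  fixes V :: "'a::linorder set"
  assumes sg: "simple_graph V E" and se: "second_eig V E \<le> 2"
    and MV: "M \<subseteq> V" and RM: "rayleigh_exceeds M E 2"
  shows "\<not> rayleigh_exceeds (V - M - {u \<in> V - M. \<exists>m\<in>M. E u m}) E 2"
proof
  note fin = simple_graphD(1)[OF sg] and sym = simple_graphD(2)[OF sg]
  define H where "H = V - M - {u \<in> V - M. \<exists>m\<in>M. E u m}"
  have HV: "H \<subseteq> V" and MH: "M \<inter> H = {}" unfolding H_def by auto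
  have nadj: "\<not> E u w" if "u \<in> M" "w \<in> H" for u w
    using that sym unfolding H_def by (auto dest: sympD)
  assume "rayleigh_exceeds H E 2"
  hence "2 < second_eig V E"
    using second_eig_gt_of_separated[of V E M H 2, OF fin sym MV HV MH] nadj RM by blast
  thus False using se by simp
qed

lemma index_partition:
  fixes V :: "'a::linorder set"
  assumes sg: "simple_graph V E" and ne: "V \<noteq> {}"
    and gi: "graph_index V E > 2" and se: "second_eig V E \<le> 2"
  shows "\<exists>M A H. M \<union> A \<union> H = V \<and> M \<inter> A = {} \<and> M \<inter> H = {} \<and> A \<inter> H = {}
            \<and> graph_index M E > 2
            \<and> (\<forall>v\<in>M. graph_index (M - {v}) E \<le> 2)
            \<and> size (filter_mset (\<lambda>\<mu>. \<mu> > 2) (spectrum_mset M E)) = 1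
            \<and> A = {v \<in> V - M. \<exists>m\<in>M. E v m}
            \<and> cyclotomic H E"
proof -
  note fin = simple_graphD(1)[OF sg] and sym = simple_graphD(2)[OF sg] and irr = simple_graphD(3)[OF sg]
  have "rayleigh_exceeds V E 2" using rayleigh_exceeds_iff_graph_index[OF fin sym ne] gi by simp
  then obtain M where MV: "M \<subseteq> V" and RM: "rayleigh_exceeds M E 2"
    and min: "\<And>v. v \<in> M \<Longrightarrow> \<not> rayleigh_exceeds (M - {v}) E 2"
    using minimal_rayleigh_exceeds_subset[OF fin] by metis
  have Mfin: "finite M" using MV fin by (rule finite_subset)
  have Mne: "M \<noteq> {}" using RM not_rayleigh_exceeds_empty by blast
  have giM: "graph_index M E > 2" using RM rayleigh_exceeds_iff_graph_index[OF Mfin sym Mne] by simp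
  have minor: "graph_index (M - {v}) E \<le> 2" if v: "v \<in> M" for v
  proof -
    have "M \<noteq> {v}" using RM not_rayleigh_exceeds_singleton[of E v 2] irr by auto
    hence "M - {v} \<noteq> {}" using v by auto
    from rayleigh_exceeds_iff_graph_index[OF _ sym this] min[OF v] Mfin show ?thesis by simp
  qed
  have one: "size (filter_mset (\<lambda>\<mu>. \<mu> > 2) (spectrum_mset M E)) = 1"
    by (rule card_eigenvalues_gt_eq_1[OF fin sym MV Mne giM se])
  define A where "A = {v \<in> V - M. \<exists>m\<in>M. E v m}"
  define H where "H = V - M - A"
  have HV: "H \<subseteq> V" unfolding H_def by auto
  have "\<not> rayleigh_exceeds H E 2"
    unfolding H_def A_def by (rule not_rayleigh_exceeds_beyond_neighbourhood[OF sg se MV RM])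
  hence "cyclotomic H E" by (rule cyclotomic_if_not_rayleigh_exceeds_2[OF finite_subset[OF HV fin] sym])
  moreover have "M \<union> A \<union> H = V" "M \<inter> A = {}" "M \<inter> H = {}" "A \<inter> H = {}"
    unfolding H_def A_def using MV by auto
  ultimately show ?thesis using giM minor one
    by (intro exI[of _ M] exI[of _ A] exI[of _ H]) (simp add: A_def)
qed

section \<open>Degrees, distances and branch vertices\<close>

definition neighbours :: "'a set \<Rightarrow> ('a \<Rightarrow> 'a \<Rightarrow> bool) \<Rightarrow> 'a \<Rightarrow> 'a set" where
  "neighbours S E u = {w \<in> S. E u w}"

lemma degree_eq_card_neighbours: "degree S E u = card (neighbours S E u)"
  unfolding degree_def neighbours_def ..

lemma finite_neighbours: "finite S \<Longrightarrow> finite (neighbours S E u)"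
  unfolding neighbours_def by simp

lemma adj_form_eq_neighbour_sum:
  assumes "finite S"
  shows "adj_form S E f = (\<Sum>u\<in>S. f u * (\<Sum>w\<in>neighbours S E u. f w))"
  unfolding adj_form_def neighbours_def using assms
  by (simp add: sum_distrib_left sum.inter_filter if_distrib[of "(*) (f _)"] cong: if_cong)

lemma sum_adj_left:
  assumes "finite S"
  shows "(\<Sum>u\<in>S. \<Sum>w\<in>S. if E u w then h u else 0) = (\<Sum>u\<in>S. h u * real (degree S E u))"
  unfolding degree_def using assms by (simp add: sum.inter_filter[symmetric] mult.commute)

lemma sum_adj_right:
  assumes "finite S" and "symp E"
  shows "(\<Sum>u\<in>S. \<Sum>w\<in>S. if E u w then h w else 0) = (\<Sum>u\<in>S. h u * real (degree S E u))"
proof -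
  have "(\<Sum>u\<in>S. \<Sum>w\<in>S. if E u w then h w else 0) = (\<Sum>w\<in>S. \<Sum>u\<in>S. if E w u then h w else 0)"
    by (subst sum.swap) (use assms(2) in \<open>auto intro!: sum.cong dest: sympD\<close>)
  thus ?thesis using sum_adj_left[OF assms(1)] by simp
qed

lemma degree_le_graph_index_sq:
  fixes V :: "'a::linorder set"
  assumes sg: "simple_graph V E" and v: "v \<in> V"
  shows "real (degree V E v) \<le> (graph_index V E)^2"
proof (cases "degree V E v = 0")
  case False
  note fin = simple_graphD(1)[OF sg] and sym = simple_graphD(2)[OF sg]
  define d where "d = degree V E v"
  define N where "N = neighbours V E v"
  define r where "r = sqrt (real d)"
  have N: "finite N" "card N = d" "v \<notin> N" "N \<subseteq> V"
    unfolding N_def d_def degree_eq_card_neighbours neighbours_def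
    using fin simple_graphD(3)[OF sg] by auto
  txt \<open>The star on \<open>v\<close> and its neighbours carries a test function with Rayleigh quotient \<open>\<surd>d\<close>.\<close>
  define f where "f u = (if u = v then r else if u \<in> N then 1 else 0)" for u
  have f0: "0 \<le> f u" for u unfolding f_def r_def by auto
  have local: "(if u = v then r * d else 0) + (if u \<in> N then r else 0)
      \<le> f u * (\<Sum>w\<in>neighbours V E u. f w)" if u: "u \<in> V" for u
  proof -
    have nonneg: "0 \<le> f u * (\<Sum>w\<in>neighbours V E u. f w)" by (simp add: f0 sum_nonneg)
    consider "u = v" | "u \<in> N" | "u \<noteq> v" "u \<notin> N" using N(3) by blast
    thus ?thesis
    proof cases
      case 1
      have "(\<Sum>w\<in>neighbours V E u. f w) = (\<Sum>w\<in>N. 1)"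
        unfolding 1 N_def[symmetric] by (intro sum.cong refl) (use N(3) in \<open>auto simp: f_def\<close>)
      thus ?thesis using 1 N by (simp add: f_def)
    next
      case 2
      hence "v \<in> neighbours V E u" using v sym unfolding N_def neighbours_def by (auto dest: sympD)
      hence "f v \<le> (\<Sum>w\<in>neighbours V E u. f w)"
        by (intro member_le_sum) (use f0 finite_neighbours[OF fin] in auto)
      moreover have "u \<noteq> v" using 2 N(3) by blast
      ultimately show ?thesis using 2 by (simp add: f_def)
    qed (use nonneg in simp)
  qed
  have "(\<Sum>u\<in>V. (if u = v then r * d else 0) + (if u \<in> N then r else 0)) \<le> adj_form V E f"
    unfolding adj_form_eq_neighbour_sum[OF fin] by (intro sum_mono local)
  hence "2 * d * r \<le> adj_form V E f"
    using v N fin by (simp add: sum.distrib sum.If_cases Int_absorb1 Int_absorb2 mult_ac)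
  also have "adj_form V E f \<le> graph_index V E * sum_sq V f"
    using adj_form_le_graph_index[OF fin sym] v by blast
  also have "sum_sq V f = 2 * d"
  proof -
    have "sum_sq V f = (\<Sum>u\<in>V. (if u = v then real d else 0) + (if u \<in> N then 1 else 0))"
      unfolding sum_sq_def by (intro sum.cong refl) (use N(3) in \<open>auto simp: f_def r_def\<close>)
    thus ?thesis using v N fin by (simp add: sum.distrib sum.If_cases Int_absorb1 Int_absorb2)
  qed
  finally have "r \<le> graph_index V E" using False unfolding d_def by simp
  hence "r^2 \<le> (graph_index V E)^2" by (rule power_mono) (simp add: r_def)
  thus ?thesis unfolding r_def d_def by simp
qed simp

lemma connected_graph_closed_subset:
  assumes "connected_graph V E" and x0: "x0 \<in> V" "x0 \<in> U"
    and closed: "\<And>x y. x \<in> U \<Longrightarrow> x \<in> V \<Longrightarrow> y \<in> V \<Longrightarrow> E x y \<Longrightarrow> y \<in> U"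
  shows "V \<subseteq> U"
proof
  fix y assume "y \<in> V"
  hence "(\<lambda>x y. x \<in> V \<and> y \<in> V \<and> E x y)\<^sup>*\<^sup>* x0 y"
    using assms(1) x0 unfolding connected_graph_def by blast
  thus "y \<in> U"
  proof (induction rule: rtranclp_induct)
    case (step y z) thus ?case using closed by blast
  qed (use x0 in simp)
qed

fun reach :: "'a set \<Rightarrow> ('a \<Rightarrow> 'a \<Rightarrow> bool) \<Rightarrow> 'a set \<Rightarrow> nat \<Rightarrow> 'a set" where
  "reach S E K 0 = K"
| "reach S E K (Suc j) = reach S E K j \<union> {u \<in> S. \<exists>w \<in> reach S E K j. E w u}"

lemma reach_mono: "i \<le> j \<Longrightarrow> reach S E K i \<subseteq> reach S E K j"
  by (induction j) (auto simp: le_Suc_eq)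

lemma reach_subset: "K \<subseteq> S \<Longrightarrow> reach S E K j \<subseteq> S"
  by (induction j) auto

lemma connected_graph_reach:
  assumes "connected_graph V E" and "v \<in> V"
  shows "V \<subseteq> (\<Union>j. reach V E {v} j)"
proof (rule connected_graph_closed_subset[OF assms])
  show "v \<in> (\<Union>j. reach V E {v} j)" by (rule UN_I[of 0]) simp_all
next
  fix x y assume "x \<in> (\<Union>j. reach V E {v} j)" "y \<in> V" "E x y"
  then obtain j where "x \<in> reach V E {v} j" "y \<in> V" "E x y" by blast
  hence "y \<in> reach V E {v} (Suc j)" by auto
  thus "y \<in> (\<Union>j. reach V E {v} j)" by blast
qed

definition reach_rank :: "'a set \<Rightarrow> ('a \<Rightarrow> 'a \<Rightarrow> bool) \<Rightarrow> 'a set \<Rightarrow> 'a \<Rightarrow> nat" where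
  "reach_rank S E K u = (LEAST j. u \<in> reach S E K j)"

lemma reach_rank_descent:
  assumes cov: "S \<subseteq> (\<Union>j. reach S E K j)" and sym: "symp E" and K: "K \<subseteq> S"
    and u: "u \<in> S - K"
  shows "\<exists>w\<in>S. E u w \<and> reach_rank S E K w < reach_rank S E K u"
proof -
  obtain j0 where "u \<in> reach S E K j0" using cov u by blast
  hence uj: "u \<in> reach S E K (reach_rank S E K u)" unfolding reach_rank_def by (rule LeastI)
  with u obtain i where i: "reach_rank S E K u = Suc i" by (cases "reach_rank S E K u") auto
  have "u \<notin> reach S E K i"
  proof
    assume "u \<in> reach S E K i"
    hence "reach_rank S E K u \<le> i" unfolding reach_rank_def by (rule Least_le)
    thus False using i by simp
  qed
  then obtain w where w: "w \<in> reach S E K i" "E w u" using uj i by auto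
  have "reach_rank S E K w \<le> i" unfolding reach_rank_def using w(1) by (rule Least_le)
  moreover have "w \<in> S" using reach_subset[OF K] w(1) by blast
  ultimately show ?thesis using i w sym by (intro bexI[of _ w]) (auto dest: sympD)
qed

lemma degree_sum_ge_of_descent:
  assumes fin: "finite S" and sym: "symp E" and K: "K \<subseteq> S"
    and descent: "\<And>u. u \<in> S - K \<Longrightarrow> \<exists>w\<in>S. E u w \<and> rk w < (rk u :: nat)"
  shows "2 * (card S - card K) \<le> (\<Sum>u\<in>S. degree S E u)"
proof -
  txt \<open>Each vertex outside \<open>K\<close> contributes the two orientations of the edge to its parent,
    and no oriented edge is counted twice because the parent has smaller rank.\<close>
  define p where "p u = (SOME w. w \<in> S \<and> E u w \<and> rk w < rk u)" for u
  have p: "p u \<in> S \<and> E u (p u) \<and> rk (p u) < rk u" if "u \<in> S - K" for u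
    unfolding p_def by (rule someI_ex) (use descent[OF that] in blast)
  define Pr where "Pr = Sigma S (neighbours S E)"
  have cPr: "card Pr = (\<Sum>u\<in>S. degree S E u)"
    unfolding Pr_def degree_eq_card_neighbours by (rule card_SigmaI) (use fin finite_neighbours in auto)
  have fPr: "finite Pr" unfolding Pr_def using fin finite_neighbours[OF fin] by (intro finite_SigmaI) auto
  define F1 where "F1 = (\<lambda>u. (u, p u)) ` (S - K)"
  define F2 where "F2 = (\<lambda>u. (p u, u)) ` (S - K)"
  have F: "F1 \<subseteq> Pr" "F2 \<subseteq> Pr"
    unfolding F1_def F2_def Pr_def neighbours_def using p sym by (auto dest: sympD)
  have "card F1 = card (S - K)" "card F2 = card (S - K)"
    unfolding F1_def F2_def by (auto simp: card_image inj_on_def)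
  moreover have "F1 \<inter> F2 = {}"
  proof (rule ccontr)
    assume "F1 \<inter> F2 \<noteq> {}"
    then obtain u u' where u: "u \<in> S - K" "u' \<in> S - K" and "u = p u'" "p u = u'"
      unfolding F1_def F2_def by auto
    hence "rk u < rk u'" "rk u' < rk u" using p[OF u(1)] p[OF u(2)] by auto
    thus False by simp
  qed
  ultimately have "card (F1 \<union> F2) = 2 * card (S - K)"
    using card_Un_disjoint[of F1 F2] finite_subset[OF F(1) fPr] finite_subset[OF F(2) fPr] by simp
  moreover have "card (F1 \<union> F2) \<le> card Pr" by (rule card_mono[OF fPr]) (use F in auto)
  moreover have "card (S - K) = card S - card K" using K fin by (simp add: card_Diff_subset finite_subset)
  ultimately show ?thesis using cPr by simp
qed

lemma card_filter_eq_sum: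
  "finite S \<Longrightarrow> real (card {u\<in>S. P u}) = (\<Sum>u\<in>S. if P u then 1 else 0)"
  by (simp add: sum.inter_filter[symmetric])

lemma degree_sum_le_of_not_rayleigh_exceeds_2:
  assumes fin: "finite S" and sym: "symp E" and not_exceeds: "\<not> rayleigh_exceeds S E 2"
  shows "4 * (\<Sum>u\<in>S. real (degree S E u))
    \<le> 8 * real (card {u\<in>S. 2 \<le> degree S E u}) + 6 * real (card {u\<in>S. degree S E u = 1})"
proof -
  let ?d = "degree S E"
  define leaf where "leaf u = (if ?d u = 1 then 1 else 0 :: real)" for u
  define f where "f u = (if 2 \<le> ?d u then 2 else leaf u)" for u
  have deg_pos: "1 \<le> ?d u" if "u \<in> S" "w \<in> S" "E u w" for u w
  proof -
    have "w \<in> neighbours S E u" unfolding neighbours_def using that by simp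
    thus ?thesis unfolding degree_eq_card_neighbours
      using finite_neighbours[OF fin] by (metis One_nat_def Suc_leI card_gt_0_iff empty_iff)
  qed
  have edge: "(if E u w then 4 - 2 * leaf u - 2 * leaf w else 0) \<le> (if E u w then f u * f w else 0)"
    if "u \<in> S" "w \<in> S" for u w
  proof (cases "E u w")
    case True
    hence fu: "f u = 2 - leaf u" and fw: "f w = 2 - leaf w"
      using deg_pos[OF that True] deg_pos[OF that(2,1) sympD[OF sym True]]
      unfolding f_def leaf_def by auto
    have "f u * f w = 4 - 2 * leaf u - 2 * leaf w + leaf u * leaf w"
      unfolding fu fw by (simp add: algebra_simps)
    moreover have "0 \<le> leaf u * leaf w" unfolding leaf_def by simp
    ultimately show ?thesis using True by simp
  qed simp
  have leaf_degree: "leaf u * real (?d u) = leaf u" for u unfolding leaf_def by simp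
  have "(\<Sum>u\<in>S. \<Sum>w\<in>S. if E u w then 4 - 2 * leaf u - 2 * leaf w else 0)
      = 4 * (\<Sum>u\<in>S. \<Sum>w\<in>S. if E u w then 1 else 0) - 2 * (\<Sum>u\<in>S. \<Sum>w\<in>S. if E u w then leaf u else 0)
        - 2 * (\<Sum>u\<in>S. \<Sum>w\<in>S. if E u w then leaf w else 0)"
    unfolding sum_distrib_left sum_subtractf[symmetric] by (intro sum.cong refl) simp
  also have "\<dots> = 4 * (\<Sum>u\<in>S. real (?d u)) - 4 * (\<Sum>u\<in>S. leaf u)"
    unfolding sum_adj_left[OF fin] sum_adj_right[OF fin sym] leaf_degree by simp
  finally have "4 * (\<Sum>u\<in>S. real (?d u)) - 4 * (\<Sum>u\<in>S. leaf u)
      = (\<Sum>u\<in>S. \<Sum>w\<in>S. if E u w then 4 - 2 * leaf u - 2 * leaf w else 0)" ..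
  also have "\<dots> \<le> adj_form S E f" unfolding adj_form_def by (intro sum_mono edge)
  also have "\<dots> \<le> 2 * sum_sq S f" using not_exceeds unfolding rayleigh_exceeds_def by (simp add: not_less)
  also have "sum_sq S f = (\<Sum>u\<in>S. 4 * (if 2 \<le> ?d u then 1 else 0) + leaf u)"
    unfolding sum_sq_def by (intro sum.cong refl) (simp add: f_def leaf_def)
  finally have "4 * (\<Sum>u\<in>S. real (?d u)) - 4 * (\<Sum>u\<in>S. leaf u)
      \<le> 2 * (\<Sum>u\<in>S. 4 * (if 2 \<le> ?d u then 1 else 0) + leaf u)" .
  moreover have "(\<Sum>u\<in>S. 4 * (if 2 \<le> ?d u then 1 else 0) + leaf u)
      = 4 * real (card {u\<in>S. 2 \<le> ?d u}) + real (card {u\<in>S. ?d u = 1})"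
    unfolding card_filter_eq_sum[OF fin] leaf_def by (simp add: sum.distrib sum_distrib_left)
  moreover have "(\<Sum>u\<in>S. leaf u) = real (card {u\<in>S. ?d u = 1})"
    unfolding card_filter_eq_sum[OF fin] leaf_def ..
  ultimately show ?thesis by linarith
qed

lemma card_branch_vertices_le:
  assumes fin: "finite S" and sym: "symp E" and K: "K \<subseteq> S"
    and descent: "\<And>u. u \<in> S - K \<Longrightarrow> \<exists>w\<in>S. E u w \<and> rk w < (rk u :: nat)"
    and not_exceeds: "\<not> rayleigh_exceeds S E 2"
  shows "card {u\<in>S. 3 \<le> degree S E u} \<le> 2 * card K"
proof -
  let ?d = "degree S E"
  let ?c = "\<lambda>P. real (card {u\<in>S. P (?d u)})"
  have "real (?d u) \<ge> 2 * (if 2 \<le> ?d u then 1 else 0) + (if 3 \<le> ?d u then 1 else 0) + (if ?d u = 1 then 1 else 0)"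
    and "1 = (if 2 \<le> ?d u then 1 else 0) + (if ?d u = 1 then 1 else 0) + (if ?d u = 0 then 1 else (0::real))"
    for u by auto
  hence degrees: "2 * ?c (\<lambda>d. 2 \<le> d) + ?c (\<lambda>d. 3 \<le> d) + ?c (\<lambda>d. d = 1) \<le> (\<Sum>u\<in>S. real (?d u))"
    and vertices: "real (card S) = ?c (\<lambda>d. 2 \<le> d) + ?c (\<lambda>d. d = 1) + ?c (\<lambda>d. d = 0)"
    unfolding card_filter_eq_sum[OF fin]
    by (simp_all add: sum.distrib[symmetric] sum_distrib_left sum_mono)
  have "2 * (card S - card K) \<le> (\<Sum>u\<in>S. ?d u)" by (rule degree_sum_ge_of_descent[OF fin sym K descent])
  hence tree: "2 * (real (card S) - real (card K)) \<le> (\<Sum>u\<in>S. real (?d u))"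
    using card_mono[OF fin K] by (simp add: of_nat_diff flip: of_nat_sum)
  note spectral = degree_sum_le_of_not_rayleigh_exceeds_2[OF fin sym not_exceeds]
  have "2 * ?c (\<lambda>d. 3 \<le> d) \<le> ?c (\<lambda>d. d = 1)" using degrees spectral by linarith
  moreover have "8 * real (card S) - 8 * real (card K) \<le> 8 * ?c (\<lambda>d. 2 \<le> d) + 6 * ?c (\<lambda>d. d = 1)"
    using tree spectral by (smt (verit))
  hence "?c (\<lambda>d. d = 1) \<le> 4 * real (card K)" unfolding vertices by simp
  ultimately have "?c (\<lambda>d. 3 \<le> d) \<le> 2 * real (card K)" by linarith
  thus ?thesis by simp
qed

section \<open>Counting vertices of degree at least three and leaves\<close>

lemma card_high_degree_le_neighbourhoods:
  fixes V :: "'a::linorder set"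
  assumes sg: "simple_graph V E" and cg: "connected_graph V E" and se: "second_eig V E \<le> 2"
    and MV: "M \<subseteq> V" and RM: "rayleigh_exceeds M E 2"
  defines "A \<equiv> {u \<in> V - M. \<exists>m\<in>M. E u m}"
  defines "HA \<equiv> {h \<in> V - M - A. \<exists>a\<in>A. E h a}"
  shows "card {v\<in>V. degree V E v > 2} \<le> card ({v\<in>V. degree V E v > 2} \<inter> M) + card A + 3 * card HA"
proof -
  note fin = simple_graphD(1)[OF sg] and sym = simple_graphD(2)[OF sg]
  define H where "H = V - M - A"
  define D where "D = {v\<in>V. degree V E v > 2}"
  have HV: "H \<subseteq> V" and HA: "HA \<subseteq> H" unfolding H_def HA_def by auto
  have Hfin: "finite H" using HV fin by (rule finite_subset)
  txt \<open>Every vertex of \<open>H\<close> is joined to \<open>HA\<close> inside \<open>H\<close>, since a path from \<open>M\<close> enters \<open>H\<close> through \<open>HA\<close>.\<close>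
  have "M \<noteq> {}" using RM not_rayleigh_exceeds_empty by blast
  then obtain m0 where m0: "m0 \<in> M" by blast
  have "V \<subseteq> M \<union> A \<union> (\<Union>j. reach H E HA j)"
  proof (rule connected_graph_closed_subset[OF cg])
    show "m0 \<in> V" "m0 \<in> M \<union> A \<union> (\<Union>j. reach H E HA j)" using m0 MV by auto
  next
    fix x y assume x: "x \<in> M \<union> A \<union> (\<Union>j. reach H E HA j)" and y: "y \<in> V" "E x y"
    show "y \<in> M \<union> A \<union> (\<Union>j. reach H E HA j)"
    proof (cases "y \<in> M \<union> A")
      case False
      hence yH: "y \<in> H" unfolding H_def using y by auto
      consider "x \<in> M" | "x \<in> A" | j where "x \<in> reach H E HA j" using x by blast
      thus ?thesis
      proof cases
        case 1 thus ?thesis using yH y sym unfolding H_def A_def by (auto dest: sympD)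
      next
        case 2
        hence "y \<in> reach H E HA 0" using yH y sym unfolding HA_def H_def by (auto dest: sympD)
        thus ?thesis by blast
      next
        case 3
        hence "y \<in> reach H E HA (Suc j)" using yH y by auto
        thus ?thesis by blast
      qed
    qed blast
  qed
  hence "H \<subseteq> (\<Union>j. reach H E HA j)" unfolding H_def by blast
  hence descent: "\<exists>w\<in>H. E u w \<and> reach_rank H E HA w < reach_rank H E HA u" if "u \<in> H - HA" for u
    using reach_rank_descent[OF _ sym HA that] by blast
  have "\<not> rayleigh_exceeds H E 2"
    using not_rayleigh_exceeds_beyond_neighbourhood[OF sg se MV RM] unfolding H_def A_def .
  hence branch: "card {h\<in>H. 3 \<le> degree H E h} \<le> 2 * card HA"
    using card_branch_vertices_le[where rk = "reach_rank H E HA", OF Hfin sym HA] descent by blast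
  have "D \<subseteq> (D \<inter> M) \<union> A \<union> HA \<union> {h\<in>H. 3 \<le> degree H E h}"
  proof
    fix v assume vD: "v \<in> D"
    show "v \<in> (D \<inter> M) \<union> A \<union> HA \<union> {h\<in>H. 3 \<le> degree H E h}"
    proof (cases "v \<in> H - HA")
      case True
      have "neighbours V E v = neighbours H E v"
        using True HV sym unfolding neighbours_def H_def A_def HA_def by (auto dest: sympD)
      hence "degree H E v = degree V E v" unfolding degree_eq_card_neighbours by simp
      thus ?thesis using vD True unfolding D_def by auto
    qed (use vD in \<open>auto simp: D_def H_def\<close>)
  qed
  hence "card D \<le> card ((D \<inter> M) \<union> A \<union> HA \<union> {h\<in>H. 3 \<le> degree H E h})"
    by (rule card_mono[rotated]) (use fin in \<open>auto simp: A_def HA_def H_def D_def\<close>)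
  also have "\<dots> \<le> card (D \<inter> M) + card A + card HA + card {h\<in>H. 3 \<le> degree H E h}"
    by (meson card_Un_le add_le_mono order_trans le_refl)
  finally show ?thesis using branch unfolding D_def by linarith
qed

lemma rayleigh_exceeds_2_star_with_pendant:
  assumes sym: "symp E" and N: "finite N" "card N = 4" "v \<notin> N" "\<And>x. x \<in> N \<Longrightarrow> E v x"
    and w: "w \<notin> insert v N" and s: "s \<in> insert v N" "E s w"
  shows "rayleigh_exceeds (insert w (insert v N)) E 2"
proof -
  define M where "M = insert w (insert v N)"
  have Mfin: "finite M" unfolding M_def using N by simp
  txt \<open>The star \<open>K\<^sub>1\<^sub>,\<^sub>4\<close> has index exactly \<open>2\<close> with eigenvector \<open>(2,1,1,1,1)\<close>;
    a small weight on the extra vertex \<open>w\<close> pushes the quotient above \<open>2\<close>.\<close>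
  define f where "f u = (if u = v then 2 else if u \<in> N then 1 else if u = w then 1/4 else 0 :: real)" for u
  define g where "g u = (if u = v then 8 else if u \<in> N then 2 else if u = w then f s / 4 else 0 :: real)" for u
  have f0: "0 \<le> f u" for u unfolding f_def by auto
  have wv: "w \<noteq> v" "w \<notin> N" using w by auto
  have fs: "1 \<le> f s" using s(1) wv unfolding f_def by auto
  have sum_N: "(\<Sum>u\<in>N. h u) = 4 * c" if "\<And>u. u \<in> N \<Longrightarrow> h u = c" for h :: "_ \<Rightarrow> real" and c
    using N(2) that by simp
  have on_N: "f u = 1" "g u = 2" if "u \<in> N" for u using that N(3) by (auto simp: f_def g_def)
  have local: "g u \<le> f u * (\<Sum>y\<in>neighbours M E u. f y)" if u: "u \<in> M" for u
  proof -
    have sum_ge: "f y \<le> (\<Sum>y\<in>neighbours M E u. f y)" if "y \<in> neighbours M E u" for y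
      by (rule member_le_sum) (use that f0 finite_neighbours[OF Mfin] in auto)
    consider "u = v" | "u \<in> N" | "u = w" using u unfolding M_def by auto
    thus ?thesis
    proof cases
      case 1
      have "N \<subseteq> neighbours M E u" using N(4) unfolding 1 neighbours_def M_def by auto
      hence "(\<Sum>y\<in>N. f y) \<le> (\<Sum>y\<in>neighbours M E u. f y)"
        by (intro sum_mono2[OF finite_neighbours[OF Mfin]]) (auto simp: f0)
      moreover have "(\<Sum>y\<in>N. f y) = 4" using sum_N[of f 1] on_N by simp
      ultimately show ?thesis using 1 by (simp add: f_def g_def)
    next
      case 2
      have "v \<in> neighbours M E u" using N(4)[OF 2] sym unfolding neighbours_def M_def by (auto dest: sympD)
      thus ?thesis using sum_ge 2 N(3) wv by (force simp: f_def g_def)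
    next
      case 3
      have "s \<in> neighbours M E u" using s sym unfolding 3 neighbours_def M_def by (auto dest: sympD)
      thus ?thesis using sum_ge 3 wv by (force simp: f_def g_def)
    qed
  qed
  have "(\<Sum>u\<in>M. g u) \<le> adj_form M E f"
    unfolding adj_form_eq_neighbour_sum[OF Mfin] by (intro sum_mono local)
  moreover have "(\<Sum>u\<in>M. g u) = 16 + f s / 4"
    using sum_N[of g 2] on_N N wv unfolding M_def by (simp add: g_def)
  moreover have "sum_sq M f = 8 + 1/16"
    using sum_N[of "\<lambda>u. (f u)^2" 1] on_N N wv unfolding M_def sum_sq_def by (simp add: f_def power2_eq_square)
  ultimately show ?thesis unfolding M_def[symmetric] rayleigh_exceeds_def using fs
    by (intro exI[of _ f]) simp
qed

lemma small_rayleigh_exceeds_subset_of_degree_ge_4: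
  fixes V :: "'a::linorder set"
  assumes sg: "simple_graph V E" and cg: "connected_graph V E" and RV: "rayleigh_exceeds V E 2"
    and v: "v \<in> V" and deg: "4 \<le> degree V E v"
  shows "\<exists>M\<subseteq>V. rayleigh_exceeds M E 2 \<and> card M \<le> 6"
proof -
  note fin = simple_graphD(1)[OF sg] and sym = simple_graphD(2)[OF sg]
  obtain N where N: "N \<subseteq> neighbours V E v" "card N = 4"
    using deg obtain_subset_with_card_n unfolding degree_eq_card_neighbours by metis
  hence Nfin: "finite N" by (metis card.infinite zero_neq_numeral)
  have vN: "v \<notin> N" and NV: "N \<subseteq> V" and adj: "\<And>x. x \<in> N \<Longrightarrow> E v x"
    using N(1) simple_graphD(3)[OF sg] unfolding neighbours_def by auto
  have cS: "card (insert v N) = 5" using vN Nfin N(2) by simp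
  show ?thesis
  proof (cases "\<exists>w\<in>V - insert v N. \<exists>s\<in>insert v N. E s w")
    case True
    then obtain w s where w: "w \<in> V" "w \<notin> insert v N" and s: "s \<in> insert v N" "E s w" by blast
    have "rayleigh_exceeds (insert w (insert v N)) E 2"
      by (rule rayleigh_exceeds_2_star_with_pendant[OF sym Nfin N(2) vN adj w(2) s])
    moreover have "card (insert w (insert v N)) = 6" using w(2) cS Nfin by simp
    ultimately show ?thesis using w v NV by (intro exI[of _ "insert w (insert v N)"]) auto
  next
    case False
    have "V \<subseteq> insert v N"
      by (rule connected_graph_closed_subset[OF cg v]) (use False in auto)
    hence "V = insert v N" using v NV by auto
    thus ?thesis using RV cS by auto
  qed
qed

text \<open>\<open>sphere S E v i\<close> is the set of vertices at distance exactly \<open>i + 1\<close> from \<open>v\<close> in \<open>S\<close>.\<close>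

definition sphere :: "'a set \<Rightarrow> ('a \<Rightarrow> 'a \<Rightarrow> bool) \<Rightarrow> 'a \<Rightarrow> nat \<Rightarrow> 'a set" where
  "sphere S E v i = reach S E {v} (Suc i) - reach S E {v} i"

lemma card_sphere_Suc_le:
  assumes fin: "finite V" and sym: "symp E" and v: "v \<in> V"
    and deg3: "\<And>u. u \<in> V \<Longrightarrow> degree V E u \<le> 3"
  shows "card (sphere V E v (Suc i))
    \<le> card (sphere V E v i) + card ({u\<in>V. degree V E u > 2} \<inter> sphere V E v i)"
proof -
  let ?B = "reach V E {v}" and ?L = "sphere V E v i"
  have BV: "?B k \<subseteq> V" for k by (rule reach_subset) (use v in auto)
  have Lfin: "finite ?L" unfolding sphere_def using BV fin by (meson finite_Diff finite_subset)
  have "sphere V E v (Suc i) \<subseteq> (\<Union>w\<in>?L. neighbours V E w - ?B (Suc i))"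
  proof
    fix u assume u: "u \<in> sphere V E v (Suc i)"
    then obtain w where w: "w \<in> ?B (Suc i)" "E w u" "u \<in> V" unfolding sphere_def by auto
    have "w \<notin> ?B i" using u w unfolding sphere_def by auto
    thus "u \<in> (\<Union>w\<in>?L. neighbours V E w - ?B (Suc i))"
      using u w unfolding sphere_def neighbours_def by auto
  qed
  hence "card (sphere V E v (Suc i)) \<le> card (\<Union>w\<in>?L. neighbours V E w - ?B (Suc i))"
    by (rule card_mono[rotated]) (use Lfin finite_neighbours[OF fin] in auto)
  also have "\<dots> \<le> (\<Sum>w\<in>?L. card (neighbours V E w - ?B (Suc i)))" by (rule card_UN_le[OF Lfin])
  also have "\<dots> \<le> (\<Sum>w\<in>?L. if degree V E w > 2 then 2 else 1)"
  proof (rule sum_mono)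
    fix w assume wL: "w \<in> ?L"
    txt \<open>One neighbour of \<open>w\<close> lies one step closer to \<open>v\<close>.\<close>
    then obtain y where y: "y \<in> ?B i" "E y w" unfolding sphere_def by auto
    have "y \<in> neighbours V E w" using y BV sym unfolding neighbours_def by (auto dest: sympD)
    moreover have "neighbours V E w - ?B (Suc i) \<subseteq> neighbours V E w - {y}"
      using y reach_mono[of i "Suc i" V E "{v}"] by auto
    ultimately have "card (neighbours V E w - ?B (Suc i)) \<le> degree V E w - 1"
      unfolding degree_eq_card_neighbours
      by (metis card_Diff_singleton card_mono finite_Diff finite_neighbours[OF fin])
    moreover have "w \<in> V" using wL BV unfolding sphere_def by auto
    ultimately show "card (neighbours V E w - ?B (Suc i)) \<le> (if degree V E w > 2 then 2 else 1)"
      using deg3 by fastforce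
  qed
  also have "\<dots> = (\<Sum>w\<in>?L. 1 + (if w \<in> {u\<in>V. degree V E u > 2} then 1 else 0))"
    using BV unfolding sphere_def by (intro sum.cong refl) auto
  also have "\<dots> = card ?L + card ({u\<in>V. degree V E u > 2} \<inter> ?L)"
    unfolding sum.distrib using Lfin by (simp add: sum.If_cases Int_commute)
  finally show ?thesis .
qed

lemma card_sphere_le_high_degree:
  assumes fin: "finite V" and sym: "symp E" and v: "v \<in> V"
    and deg3: "\<And>u. u \<in> V \<Longrightarrow> degree V E u \<le> 3"
  shows "card (sphere V E v i) \<le> 3 + card ({u\<in>V. degree V E u > 2} \<inter> reach V E {v} i)"
proof (induction i)
  case 0
  have "sphere V E v 0 \<subseteq> neighbours V E v" unfolding sphere_def neighbours_def by auto
  hence "card (sphere V E v 0) \<le> degree V E v"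
    unfolding degree_eq_card_neighbours by (rule card_mono[OF finite_neighbours[OF fin]])
  thus ?case using deg3[OF v] by simp
next
  case (Suc i)
  let ?D = "{u\<in>V. degree V E u > 2}"
  have "?D \<inter> reach V E {v} (Suc i) = (?D \<inter> reach V E {v} i) \<union> (?D \<inter> sphere V E v i)"
    using reach_mono[of i "Suc i" V E "{v}"] unfolding sphere_def by auto
  moreover have "(?D \<inter> reach V E {v} i) \<inter> (?D \<inter> sphere V E v i) = {}" unfolding sphere_def by blast
  ultimately have "card (?D \<inter> reach V E {v} (Suc i)) = card (?D \<inter> reach V E {v} i) + card (?D \<inter> sphere V E v i)"
    using fin by (simp add: card_Un_disjoint)
  thus ?case using Suc card_sphere_Suc_le[OF fin sym v deg3, of i] by linarith
qed

lemma card_sphere_Suc_le_double: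
  assumes "finite V" and "symp E" and "v \<in> V" and "\<And>u. u \<in> V \<Longrightarrow> degree V E u \<le> 3"
  shows "card (sphere V E v (Suc i)) \<le> 2 * card (sphere V E v i)"
proof -
  have "sphere V E v i \<subseteq> V" unfolding sphere_def using reach_subset[of "{v}" V E] assms(3) by auto
  hence "card ({u\<in>V. degree V E u > 2} \<inter> sphere V E v i) \<le> card (sphere V E v i)"
    by (intro card_mono) (use assms(1) finite_subset in auto)
  thus ?thesis using card_sphere_Suc_le[OF assms, of i] by simp
qed

lemma reach_subset_reach_ball:
  assumes "i \<le> k"
  shows "reach V E K i \<subseteq> reach (reach V E K k) E K i"
  using assms
proof (induction i)
  case (Suc i)
  have "reach V E K (Suc i) \<subseteq> reach V E K k" using reach_mono[OF Suc.prems] .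
  thus ?case using Suc by auto
qed simp

lemma card_high_degree_in_ball_le_2:
  fixes V :: "'a::linorder set"
  assumes fin: "finite V" and sym: "symp E" and v: "v \<in> V"
    and not_exceeds: "\<not> rayleigh_exceeds (reach V E {v} (Suc j)) E 2"
  shows "card ({u\<in>V. degree V E u > 2} \<inter> reach V E {v} j) \<le> 2"
proof -
  define S where "S = reach V E {v} (Suc j)"
  have SV: "S \<subseteq> V" and vS: "{v} \<subseteq> S"
    unfolding S_def using reach_subset[of "{v}" V E] reach_mono[of 0 "Suc j" V E "{v}"] v by auto
  have Sfin: "finite S" using SV fin by (rule finite_subset)
  have "S \<subseteq> (\<Union>k. reach S E {v} k)" using reach_subset_reach_ball[of "Suc j" "Suc j" V E "{v}"]
    unfolding S_def by blast
  hence descent: "\<exists>w\<in>S. E u w \<and> reach_rank S E {v} w < reach_rank S E {v} u" if "u \<in> S - {v}" for u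
    using reach_rank_descent[OF _ sym vS that] by blast
  have "card {u\<in>S. 3 \<le> degree S E u} \<le> 2 * card {v}"
    using card_branch_vertices_le[where rk = "reach_rank S E {v}", OF Sfin sym vS] descent not_exceeds
    unfolding S_def by blast
  moreover have "{u\<in>V. degree V E u > 2} \<inter> reach V E {v} j \<subseteq> {u\<in>S. 3 \<le> degree S E u}"
  proof
    fix u assume u: "u \<in> {u\<in>V. degree V E u > 2} \<inter> reach V E {v} j"
    txt \<open>All neighbours of a vertex at distance at most \<open>j\<close> lie in the ball of radius \<open>j + 1\<close>.\<close>
    have "neighbours S E u = neighbours V E u"
      using u SV unfolding S_def neighbours_def by auto
    moreover have "u \<in> S" using u reach_mono[of j "Suc j" V E "{v}"] unfolding S_def by auto
    ultimately show "u \<in> {u\<in>S. 3 \<le> degree S E u}" using u unfolding degree_eq_card_neighbours by auto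
  qed
  hence "card ({u\<in>V. degree V E u > 2} \<inter> reach V E {v} j) \<le> card {u\<in>S. 3 \<le> degree S E u}"
    by (rule card_mono[rotated]) (use Sfin in auto)
  ultimately show ?thesis by simp
qed

lemma reach_covers_finite:
  assumes "finite V" and "V \<subseteq> (\<Union>j. reach S E K j)"
  obtains J where "V \<subseteq> reach S E K J"
proof -
  have "reach S E K i \<subseteq> reach S E K k \<or> reach S E K k \<subseteq> reach S E K i" for i k
    using nat_le_linear[of i k] reach_mono by metis
  hence "subset.chain UNIV (range (reach S E K))" unfolding subset.chain_def by auto
  thus thesis using finite_subset_Union_chain[OF assms] that by blast
qed

lemma card_high_degree_le_of_subcubic:
  fixes V :: "'a::linorder set"
  assumes sg: "simple_graph V E" and cg: "connected_graph V E" and se: "second_eig V E \<le> 2"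
    and RV: "rayleigh_exceeds V E 2" and v: "v \<in> V" and deg3: "\<And>u. u \<in> V \<Longrightarrow> degree V E u \<le> 3"
  shows "card {u\<in>V. degree V E u > 2} \<le> 157"
proof -
  note fin = simple_graphD(1)[OF sg] and sym = simple_graphD(2)[OF sg]
  let ?B = "reach V E {v}" and ?L = "\<lambda>i. card (sphere V E v i)"
  define D where "D = {u\<in>V. degree V E u > 2}"
  have BV: "?B k \<subseteq> V" for k using reach_subset[of "{v}" V E] v by auto
  have Bfin: "finite (?B k)" for k using BV fin by (rule finite_subset)
  have Sfin: "finite (sphere V E v i)" for i unfolding sphere_def using Bfin by (rule finite_Diff)
  txt \<open>Take \<open>M\<close> to be the smallest ball around \<open>v\<close> whose index exceeds \<open>2\<close>.\<close>
  obtain J where "V \<subseteq> ?B J" using reach_covers_finite[OF fin connected_graph_reach[OF cg v]] .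
  hence "rayleigh_exceeds (?B J) E 2" using RV BV[of J] by (metis subset_antisym)
  hence ex: "\<exists>k. rayleigh_exceeds (?B k) E 2" ..
  define r where "r = (LEAST k. rayleigh_exceeds (?B k) E 2)"
  have "\<not> rayleigh_exceeds (?B 0) E 2"
    using not_rayleigh_exceeds_singleton[of E v 2] simple_graphD(3)[OF sg] by simp
  hence "r \<noteq> 0" using LeastI_ex[OF ex] unfolding r_def by metis
  then obtain j where rj: "r = Suc j" using not0_implies_Suc by blast
  have RM: "rayleigh_exceeds (?B (Suc j)) E 2" using LeastI_ex[OF ex] rj unfolding r_def by simp
  have not_exceeds: "\<not> rayleigh_exceeds (?B j) E 2"
    using not_less_Least[of j "\<lambda>k. rayleigh_exceeds (?B k) E 2"] rj unfolding r_def by simp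
  define M where "M = ?B (Suc j)"
  define A where "A = {u \<in> V - M. \<exists>m\<in>M. E u m}"
  define HA where "HA = {h \<in> V - M - A. \<exists>a\<in>A. E h a}"
  have decomp: "card D \<le> card (D \<inter> M) + card A + 3 * card HA"
    using card_high_degree_le_neighbourhoods[OF sg cg se BV RM] unfolding D_def A_def HA_def M_def .
  have A_sphere: "a \<in> sphere V E v (Suc j)" if "a \<in> A" for a
    using that sym unfolding A_def M_def sphere_def by (auto dest: sympD)
  hence A: "card A \<le> ?L (Suc j)" by (intro card_mono[OF Sfin]) blast
  have "h \<in> sphere V E v (Suc (Suc j))" if hHA: "h \<in> HA" for h
  proof -
    obtain a where h: "h \<in> V" "h \<notin> M" "h \<notin> A" and a: "a \<in> A" "E h a"
      using hHA unfolding HA_def by blast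
    have "a \<in> ?B (Suc (Suc j))" using A_sphere[OF a(1)] unfolding sphere_def by blast
    hence "h \<in> ?B (Suc (Suc (Suc j)))" using h(1) sympD[OF sym a(2)]
      by (simp only: reach.simps(2)[of V E "{v}" "Suc (Suc j)"]) blast
    moreover have "h \<notin> ?B (Suc (Suc j))"
      using h sym unfolding A_def M_def by (auto dest: sympD)
    ultimately show ?thesis unfolding sphere_def by blast
  qed
  hence HA: "card HA \<le> ?L (Suc (Suc j))" by (intro card_mono[OF Sfin]) blast
  have double: "?L (Suc i) \<le> 2 * ?L i" for i by (rule card_sphere_Suc_le_double[OF fin sym v deg3])
  have "?L j \<le> 10 \<and> card (D \<inter> M) \<le> 17"
  proof (cases j)
    case 0
    have "?B 1 \<subseteq> insert v (neighbours V E v)" unfolding neighbours_def by auto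
    hence "card (?B 1) \<le> card (insert v (neighbours V E v))"
      by (rule card_mono[rotated]) (simp add: finite_neighbours[OF fin])
    also have "\<dots> \<le> Suc (degree V E v)"
      unfolding degree_eq_card_neighbours by (simp add: card_insert_if finite_neighbours[OF fin])
    finally have "card (?B 1) \<le> 4" using deg3[OF v] by simp
    moreover have "card (D \<inter> M) \<le> card (?B 1)" unfolding M_def 0 One_nat_def by (rule card_mono[OF Bfin]) blast
    ultimately have "card (D \<inter> M) \<le> 4" by simp
    moreover have "card (D \<inter> ?B 0) \<le> card {v}" by (rule card_mono) auto
    hence "?L 0 \<le> 4" using card_sphere_le_high_degree[OF fin sym v deg3, of 0] unfolding D_def by simp
    ultimately show ?thesis using 0 by simp
  next
    case (Suc j')
    have inner: "card (D \<inter> ?B j') \<le> 2"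
      using card_high_degree_in_ball_le_2[OF fin sym v] not_exceeds unfolding D_def Suc by blast
    hence "?L j' \<le> 5" using card_sphere_le_high_degree[OF fin sym v deg3, of j'] unfolding D_def by simp
    hence Lj: "?L j \<le> 10" using double[of j'] Suc by simp
    have "D \<inter> M \<subseteq> (D \<inter> ?B j') \<union> sphere V E v j' \<union> sphere V E v j"
      unfolding M_def Suc sphere_def by blast
    hence "card (D \<inter> M) \<le> card ((D \<inter> ?B j') \<union> sphere V E v j' \<union> sphere V E v j)"
      by (rule card_mono[rotated]) (simp add: Bfin Sfin)
    also have "\<dots> \<le> card (D \<inter> ?B j') + ?L j' + ?L j"
      by (meson card_Un_le add_le_mono order_trans le_refl)
    finally show ?thesis using Lj inner \<open>?L j' \<le> 5\<close> by simp
  qed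
  moreover have "?L (Suc j) \<le> 20" "?L (Suc (Suc j)) \<le> 40"
    using double[of j] double[of "Suc j"] calculation by simp_all
  ultimately show ?thesis using decomp A HA unfolding D_def by linarith
qed

lemma card_leaves_le:
  fixes V :: "'a::linorder set"
  assumes sg: "simple_graph V E" and cg: "connected_graph V E"
  shows "real (card {u\<in>V. degree V E u = 1})
    \<le> 2 + (\<Sum>u\<in>{u\<in>V. degree V E u > 2}. real (degree V E u) - 2)"
proof -
  note fin = simple_graphD(1)[OF sg] and sym = simple_graphD(2)[OF sg]
  let ?d = "\<lambda>u. real (degree V E u)"
  obtain v where v: "v \<in> V" using cg unfolding connected_graph_def by auto
  have descent: "\<exists>w\<in>V. E u w \<and> reach_rank V E {v} w < reach_rank V E {v} u" if "u \<in> V - {v}" for u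
    using reach_rank_descent[OF connected_graph_reach[OF cg v] sym _ that] v by blast
  have "2 * (card V - card {v}) \<le> (\<Sum>u\<in>V. degree V E u)"
    using degree_sum_ge_of_descent[where rk = "reach_rank V E {v}", OF fin sym _ descent] v by blast
  hence "2 * real (card V) - 2 \<le> (\<Sum>u\<in>V. ?d u)"
    using v fin by (simp add: of_nat_diff Suc_le_eq card_gt_0_iff flip: of_nat_sum)
  hence "-2 \<le> (\<Sum>u\<in>V. ?d u - 2)" by (simp add: sum_subtractf)
  also have "\<dots> \<le> (\<Sum>u\<in>V. (if degree V E u > 2 then ?d u - 2 else 0) - (if degree V E u = 1 then 1 else 0))"
    by (intro sum_mono) (auto simp: not_less numeral_2_eq_2 le_Suc_eq)
  also have "\<dots> = (\<Sum>u\<in>V. if degree V E u > 2 then ?d u - 2 else 0) - (\<Sum>u\<in>V. if degree V E u = 1 then 1 else 0)"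
    by (rule sum_subtractf)
  also have "\<dots> = (\<Sum>u\<in>{u\<in>V. degree V E u > 2}. ?d u - 2) - real (card {u\<in>V. degree V E u = 1})"
    by (simp only: sum.inter_filter[OF fin] card_filter_eq_sum[OF fin])
  finally show ?thesis by linarith
qed

lemma card_subset_neighbourhoods_le:
  assumes fin: "finite V" and X: "X \<subseteq> V" and Y: "Y \<subseteq> (\<Union>x\<in>X. neighbours V E x)"
    and deg: "\<And>x. x \<in> X \<Longrightarrow> real (degree V E x) \<le> t"
  shows "real (card Y) \<le> real (card X) * t"
proof -
  have Xfin: "finite X" using X fin by (rule finite_subset)
  have "card Y \<le> card (\<Union>x\<in>X. neighbours V E x)"
    by (rule card_mono[OF _ Y]) (use Xfin finite_neighbours[OF fin] in auto)
  also have "\<dots> \<le> (\<Sum>x\<in>X. degree V E x)"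
    unfolding degree_eq_card_neighbours by (rule card_UN_le[OF Xfin])
  finally have "real (card Y) \<le> (\<Sum>x\<in>X. real (degree V E x))" by (simp flip: of_nat_sum)
  also have "\<dots> \<le> real (card X) * t" using sum_mono[OF deg] by simp
  finally show ?thesis .
qed

lemma card_high_degree_le_index_bound:
  fixes V :: "'a::linorder set"
  assumes sg: "simple_graph V E" and cg: "connected_graph V E"
    and gi: "graph_index V E > 2" and se: "second_eig V E \<le> 2"
  shows "real (card {v\<in>V. degree V E v > 2})
    \<le> 10 * (3 * (graph_index V E)^4 + (graph_index V E)^2 + 1)"
proof -
  note fin = simple_graphD(1)[OF sg] and sym = simple_graphD(2)[OF sg]
  define t where "t = (graph_index V E)^2"
  define D where "D = {v\<in>V. degree V E v > 2}"
  have ne: "V \<noteq> {}" using cg unfolding connected_graph_def by blast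
  have RV: "rayleigh_exceeds V E 2" using rayleigh_exceeds_iff_graph_index[OF fin sym ne] gi by simp
  have t4: "4 \<le> t" unfolding t_def using gi power_mono[of 2 "graph_index V E" 2] by simp
  have bound: "10 * (3 * (graph_index V E)^4 + (graph_index V E)^2 + 1) = 10 * (3 * t^2 + t + 1)"
    unfolding t_def by (simp flip: power_mult)
  have deg: "real (degree V E u) \<le> t" if "u \<in> V" for u
    unfolding t_def by (rule degree_le_graph_index_sq[OF sg that])
  show ?thesis
  proof (cases "\<exists>v\<in>V. 4 \<le> degree V E v")
    case True
    txt \<open>A vertex of degree at least \<open>4\<close> yields a set \<open>M\<close> of at most \<open>6\<close> vertices
      with index above \<open>2\<close>; its two neighbourhood layers have at most \<open>6t\<close> and \<open>6t\<^sup>2\<close> vertices.\<close>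
    then obtain M where MV: "M \<subseteq> V" and RM: "rayleigh_exceeds M E 2" and cM: "card M \<le> 6"
      using small_rayleigh_exceeds_subset_of_degree_ge_4[OF sg cg RV] by blast
    define A where "A = {u \<in> V - M. \<exists>m\<in>M. E u m}"
    define HA where "HA = {h \<in> V - M - A. \<exists>a\<in>A. E h a}"
    have "card D \<le> card (D \<inter> M) + card A + 3 * card HA"
      using card_high_degree_le_neighbourhoods[OF sg cg se MV RM] unfolding D_def A_def HA_def .
    hence decomp: "real (card D) \<le> real (card (D \<inter> M)) + real (card A) + 3 * real (card HA)"
      by (metis of_nat_add of_nat_le_iff of_nat_mult of_nat_numeral)
    have DM: "card (D \<inter> M) \<le> 6" using card_mono[OF finite_subset[OF MV fin], of "D \<inter> M"] cM by auto
    have "real (card A) \<le> real (card M) * t"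
      using sym MV by (intro card_subset_neighbourhoods_le[OF fin MV _ deg])
        (auto simp: A_def neighbours_def dest: sympD)
    also have "\<dots> \<le> 6 * t" using cM t4 by (intro mult_right_mono) auto
    finally have A: "real (card A) \<le> 6 * t" .
    have "real (card HA) \<le> real (card A) * t"
      using sym by (intro card_subset_neighbourhoods_le[OF fin _ _ deg])
        (auto simp: A_def HA_def neighbours_def dest: sympD)
    also have "\<dots> \<le> 6 * t * t" using A t4 by (intro mult_right_mono) auto
    finally have "real (card HA) \<le> 6 * t * t" .
    hence "real (card D) \<le> 6 + 6 * t + 18 * t^2" using decomp DM A by (simp add: power2_eq_square)
    thus ?thesis unfolding bound D_def using t4 by simp
  next
    case False
    hence deg3: "\<And>u. u \<in> V \<Longrightarrow> degree V E u \<le> 3" by force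
    obtain v where v: "v \<in> V" using ne by blast
    have "card D \<le> 157" unfolding D_def by (rule card_high_degree_le_of_subcubic[OF sg cg se RV v deg3])
    moreover have "16 \<le> t^2" using power_mono[OF t4, of 2] by simp
    ultimately show ?thesis unfolding bound D_def using t4 by simp
  qed
qed

lemma card_leaves_le_index_bound:
  fixes V :: "'a::linorder set"
  assumes sg: "simple_graph V E" and cg: "connected_graph V E"
    and gi: "graph_index V E > 2" and se: "second_eig V E \<le> 2"
  defines "B \<equiv> 10 * (3 * (graph_index V E)^4 + (graph_index V E)^2 + 1)"
  shows "real (card {v\<in>V. degree V E v = 1}) \<le> (graph_index V E)^2 * B"
proof -
  define t where "t = (graph_index V E)^2"
  define D where "D = {v\<in>V. degree V E v > 2}"
  have t4: "4 \<le> t" unfolding t_def using gi power_mono[of 2 "graph_index V E" 2] by simp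
  have "1 \<le> B" unfolding B_def by (simp add: add_nonneg_nonneg)
  have "real (card {v\<in>V. degree V E v = 1}) \<le> 2 + (\<Sum>u\<in>D. real (degree V E u) - 2)"
    unfolding D_def by (rule card_leaves_le[OF sg cg])
  also have "\<dots> \<le> 2 + (\<Sum>u\<in>D. t - 2)"
    using degree_le_graph_index_sq[OF sg] unfolding D_def t_def by (intro add_left_mono sum_mono) auto
  also have "\<dots> = 2 + real (card D) * (t - 2)" by simp
  also have "\<dots> \<le> 2 + B * (t - 2)"
    using card_high_degree_le_index_bound[OF assms(1-4)] t4 unfolding B_def D_def
    by (intro add_left_mono mult_right_mono) auto
  also have "\<dots> \<le> t * B" using \<open>1 \<le> B\<close> by (simp add: algebra_simps)
  finally show ?thesis unfolding t_def .
qed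

theorem proposition7:
  fixes V :: "'a::linorder set" and E :: "'a \<Rightarrow> 'a \<Rightarrow> bool"
  assumes "simple_graph V E" and "connected_graph V E"
    and "graph_index V E > 2" and "second_eig V E \<le> 2"
  shows "(\<exists>M A H. M \<union> A \<union> H = V \<and> M \<inter> A = {} \<and> M \<inter> H = {} \<and> A \<inter> H = {}
            \<and> graph_index M E > 2
            \<and> (\<forall>v\<in>M. graph_index (M - {v}) E \<le> 2)
            \<and> size (filter_mset (\<lambda>\<mu>. \<mu> > 2) (spectrum_mset M E)) = 1
            \<and> A = {v \<in> V - M. \<exists>m\<in>M. E v m}
            \<and> cyclotomic H E)
       \<and> (let lam = graph_index V E; B = 10 * (3 * lam^4 + lam^2 + 1) in
            real (card {v \<in> V. degree V E v > 2}) \<le> B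
          \<and> real (card {v \<in> V. degree V E v = 1}) \<le> lam^2 * B)"
proof -
  have "V \<noteq> {}" using assms(2) unfolding connected_graph_def by blast
  thus ?thesis
    unfolding Let_def
    using index_partition[OF assms(1) _ assms(3,4)] card_high_degree_le_index_bound[OF assms]
      card_leaves_le_index_bound[OF assms]
    by blast
qed

end
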